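(* Let $\kappa\ge2$, $\alpha,\beta\in\mathbb{R}$ and $\Sigma_\lambda\in\mathscr{M}_\kappa^+$. Then there exists a unique global solution $\{\mathsf{V}_t\}_{t\ge0}$ to the matrix ODE $\frac{d}{dt}\mathsf{V}_t=\mathsf{F}(\mathsf{V}_t)$, $\mathsf{V}_0=\Sigma_\lambda$, and $\mathsf{V}_t\in\mathscr{M}_\kappa^+$ for all $t\in[0,\infty)$.
   Context: Matrices are indexed by $\{0,\dots,\kappa\}$. $\mathsf{M}_\kappa(a,b,c)$ has $(i,j)$ entry $a$ if $i=j$, $b$ if $i\ne j$ and ($i=0$ or $j=0$), $c$ otherwise; $\mathscr{M}_\kappa=\{\mathsf{M}_\kappa(a,b,c):(a,b,c)\in\mathbb{R}^3\}$ and $\mathscr{M}_\kappa^+$ its positive definite elements. $\mathsf{I}$ is the identity, $\mathsf{Q}$ has $\mathsf{Q}_{00}=1$ and other entries $0$, $\mathsf{P}$ has $\mathsf{P}_{0j}=1$ for $j\ne0$ and other entries $0$. With $f(a,b,c)=\frac{b(a-c)}{a^2-b^2}$, $g(a,b,c)=\frac{ac-b^2}{a^2-b^2}$, for $\mathsf{A}=\mathsf{M}_\kappa(a,b,c)$ set $\tilde\alpha(\mathsf{A})=\alpha+\frac{\beta(\kappa-1)}{\kappa}f(a,b,c)$, $\tilde\beta(\mathsf{A})=\frac\beta\kappa+\frac{\beta(\kappa-1)}{\kappa}g(a,b,c)$ if $|a|\ne|b|$ and both $0$ otherwise; $\mathsf{L}(\mathsf{A})=\alpha\mathsf{Q}+\tilde\alpha(\mathsf{A})(\mathsf{I}-\mathsf{Q})+\frac\beta\kappa\mathsf{P}+\tilde\beta(\mathsf{A})\mathsf{P}^*$;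 $\mathsf{F}(\mathsf{A})=2\mathsf{I}-\mathsf{L}(\mathsf{A})\mathsf{A}-\mathsf{A}\mathsf{L}(\mathsf{A})^*$. *)

theory Defs
  imports "HOL-Analysis.Analysis"
begin

text \<open>Matrices indexed by {0..kappa} are represented as functions nat => nat => real;
  only entries with both indices in {0..kappa} are meaningful.\<close>

type_synonym rmat = "nat \<Rightarrow> nat \<Rightarrow> real"

definition matM :: "nat \<Rightarrow> real \<Rightarrow> real \<Rightarrow> real \<Rightarrow> rmat" where
  "matM \<kappa> a b c = (\<lambda>i j. if i = j then a else if i = 0 \<or> j = 0 then b else c)"

definition mat_eq_on :: "nat \<Rightarrow> rmat \<Rightarrow> rmat \<Rightarrow> bool" where
  "mat_eq_on \<kappa> A B \<longleftrightarrow> (\<forall>i\<le>\<kappa>. \<forall>j\<le>\<kappa>. A i j = B i j)"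

definition in_scrM :: "nat \<Rightarrow> rmat \<Rightarrow> bool" where
  "in_scrM \<kappa> A \<longleftrightarrow> (\<exists>a b c. mat_eq_on \<kappa> A (matM \<kappa> a b c))"

definition pos_def :: "nat \<Rightarrow> rmat \<Rightarrow> bool" where
  "pos_def \<kappa> A \<longleftrightarrow> (\<forall>i\<le>\<kappa>. \<forall>j\<le>\<kappa>. A i j = A j i) \<and>
     (\<forall>x::nat \<Rightarrow> real. (\<exists>i\<le>\<kappa>. x i \<noteq> 0) \<longrightarrow>
        (\<Sum>i\<le>\<kappa>. \<Sum>j\<le>\<kappa>. x i * A i j * x j) > 0)"

definition in_scrM_pos :: "nat \<Rightarrow> rmat \<Rightarrow> bool" where
  "in_scrM_pos \<kappa> A \<longleftrightarrow> in_scrM \<kappa> A \<and> pos_def \<kappa> A"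

definition matI :: rmat where "matI = (\<lambda>i j. if i = j then 1 else 0)"
definition matQ :: rmat where "matQ = (\<lambda>i j. if i = 0 \<and> j = 0 then 1 else 0)"
definition matP :: rmat where "matP = (\<lambda>i j. if i = 0 \<and> j \<noteq> 0 then 1 else 0)"

definition mat_tr :: "rmat \<Rightarrow> rmat" where "mat_tr A = (\<lambda>i j. A j i)"

definition mat_mult :: "nat \<Rightarrow> rmat \<Rightarrow> rmat \<Rightarrow> rmat" where
  "mat_mult \<kappa> A B = (\<lambda>i j. \<Sum>k\<le>\<kappa>. A i k * B k j)"

definition ff :: "real \<Rightarrow> real \<Rightarrow> real \<Rightarrow> real" where
  "ff a b c = b * (a - c) / (a\<^sup>2 - b\<^sup>2)"

definition gg :: "real \<Rightarrow> real \<Rightarrow> real \<Rightarrow> real" where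
  "gg a b c = (a * c - b\<^sup>2) / (a\<^sup>2 - b\<^sup>2)"

text \<open>For A = M(a,b,c) with kappa >= 2 the parameters are recovered as
  a = A 0 0, b = A 0 1, c = A 1 2.\<close>

definition alpha_t :: "nat \<Rightarrow> real \<Rightarrow> real \<Rightarrow> rmat \<Rightarrow> real" where
  "alpha_t \<kappa> \<alpha> \<beta> A = (let a = A 0 0; b = A 0 1; c = A 1 2 in
     if \<bar>a\<bar> \<noteq> \<bar>b\<bar> then \<alpha> + \<beta> * (real \<kappa> - 1) / real \<kappa> * ff a b c else 0)"

definition beta_t :: "nat \<Rightarrow> real \<Rightarrow> real \<Rightarrow> rmat \<Rightarrow> real" where
  "beta_t \<kappa> \<alpha> \<beta> A = (let a = A 0 0; b = A 0 1; c = A 1 2 in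
     if \<bar>a\<bar> \<noteq> \<bar>b\<bar> then \<beta> / real \<kappa> + \<beta> * (real \<kappa> - 1) / real \<kappa> * gg a b c else 0)"

definition matL :: "nat \<Rightarrow> real \<Rightarrow> real \<Rightarrow> rmat \<Rightarrow> rmat" where
  "matL \<kappa> \<alpha> \<beta> A = (\<lambda>i j. \<alpha> * matQ i j + alpha_t \<kappa> \<alpha> \<beta> A * (matI i j - matQ i j)
     + \<beta> / real \<kappa> * matP i j + beta_t \<kappa> \<alpha> \<beta> A * mat_tr matP i j)"

definition matF :: "nat \<Rightarrow> real \<Rightarrow> real \<Rightarrow> rmat \<Rightarrow> rmat" where
  "matF \<kappa> \<alpha> \<beta> A = (\<lambda>i j. 2 * matI i j - mat_mult \<kappa> (matL \<kappa> \<alpha> \<beta> A) A i j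
     - mat_mult \<kappa> A (mat_tr (matL \<kappa> \<alpha> \<beta> A)) i j)"

definition is_global_solution :: "nat \<Rightarrow> real \<Rightarrow> real \<Rightarrow> rmat \<Rightarrow> (real \<Rightarrow> rmat) \<Rightarrow> bool" where
  "is_global_solution \<kappa> \<alpha> \<beta> S V \<longleftrightarrow>
     (\<forall>t\<ge>0. in_scrM \<kappa> (V t)) \<and> mat_eq_on \<kappa> (V 0) S \<and>
     (\<forall>t\<ge>0. \<forall>i\<le>\<kappa>. \<forall>j\<le>\<kappa>.
        ((\<lambda>s. V s i j) has_real_derivative matF \<kappa> \<alpha> \<beta> (V t) i j) (at t within {0..}))"

end

theory Submission
  imports Defs
begin

(* Restricted to the family M_kappa, the field F becomes, in the linear coordinates
   p = a + b, q = a - b, e = a - c of M(a, b, c), an explicit rational vector field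
   (reduced_field), and positive definiteness of M(a, b, c) becomes the open condition
   p, q, e > 0 and (kappa - 1) e (p + q) < 2 kappa p q.

   Existence: in the variables x = e/p, y = e/q, z = 1/e the per-capita growth rates of the
   reduced system are polynomial, so in logarithmic coordinates the system is globally
   Lipschitz once the exponentials are clipped at suitable levels. Barrier arguments show that
   x + y < 2 kappa / (kappa - 1) and that z stays bounded, so the clipping is never active: the
   Picard solution solves the true system and stays in the positive definite region.

   Uniqueness: the reduced coordinates of any global solution obey the same ODE as long as
   p and q do not vanish, and the reduced field is locally Lipschitz there. A Gronwall estimate
   for |v - u|^2 at the first time two solutions separate shows that they never separate. *)

section \<open>Autonomous differential equations\<close>

lemma has_real_derivative_components:
  assumes "(f has_vector_derivative f') F"
  shows "((\<lambda>t. fst (f t)) has_real_derivative fst f') F"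
    and "((\<lambda>t. fst (snd (f t))) has_real_derivative fst (snd f')) F"
    and "((\<lambda>t. snd (snd (f t))) has_real_derivative snd (snd f')) F"
proof -
  note fst = bounded_linear.has_vector_derivative[OF bounded_linear_fst]
    and snd = bounded_linear.has_vector_derivative[OF bounded_linear_snd]
  show "((\<lambda>t. fst (f t)) has_real_derivative fst f') F"
    and "((\<lambda>t. fst (snd (f t))) has_real_derivative fst (snd f')) F"
    and "((\<lambda>t. snd (snd (f t))) has_real_derivative snd (snd f')) F"
    using fst[OF assms] fst[OF snd[OF assms]] snd[OF snd[OF assms]]
    by (simp_all add: has_real_derivative_iff_has_vector_derivative)
qed

primrec picard_iter :: "('a::banach \<Rightarrow> 'a) \<Rightarrow> 'a \<Rightarrow> nat \<Rightarrow> real \<Rightarrow> 'a" where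
  "picard_iter H u0 0 t = u0"
| "picard_iter H u0 (Suc k) t = u0 + integral {0..t} (\<lambda>s. H (picard_iter H u0 k s))"

context
  fixes H :: "'a::banach \<Rightarrow> 'a" and L :: real and u0 :: 'a
  assumes lipschitz: "L-lipschitz_on UNIV H"
begin

private lemma lipschitz_constant_nonneg: "L \<ge> 0"
  using lipschitz_on_nonneg[OF lipschitz] .

private lemma continuous_on_field: "continuous_on S H"
  using lipschitz_on_continuous_on[OF lipschitz] continuous_on_subset by blast

lemma continuous_on_picard_iter: "continuous_on {0..T} (picard_iter H u0 k)"
proof (induction k)
  case 0
  then show ?case by simp
next
  case (Suc k)
  have "continuous_on {0..T} (\<lambda>s. H (picard_iter H u0 k s))"
    using continuous_on_compose[OF Suc continuous_on_field] by (simp add: o_def)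
  then have "continuous_on {0..T} (\<lambda>t. integral {0..t} (\<lambda>s. H (picard_iter H u0 k s)))"
    by (rule continuous_on_vector_derivative[OF integral_has_vector_derivative])
  then show ?case by (simp add: continuous_intros)
qed

lemma continuous_on_field_picard_iter: "continuous_on {0..T} (\<lambda>s. H (picard_iter H u0 k s))"
  using continuous_on_compose[OF continuous_on_picard_iter continuous_on_field] by (simp add: o_def)

lemma picard_iter_step_bound:
  assumes "t \<ge> 0"
  shows "norm (picard_iter H u0 (Suc k) t - picard_iter H u0 k t)
    \<le> norm (H u0) * L ^ k * t ^ Suc k / fact (Suc k)"
  using assms
proof (induction k arbitrary: t)
  case 0
  then show ?case by simp
next
  case (Suc k)
  define B where "B s = norm (H u0) * L ^ Suc k * s ^ Suc (Suc k) / fact (Suc (Suc k))" for s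
  have intg: "(\<lambda>s. H (picard_iter H u0 j s)) integrable_on {0..t}" for j
    by (rule integrable_continuous_real[OF continuous_on_field_picard_iter])
  have "picard_iter H u0 (Suc (Suc k)) t - picard_iter H u0 (Suc k) t
      = integral {0..t} (\<lambda>s. H (picard_iter H u0 (Suc k) s) - H (picard_iter H u0 k s))"
    using integral_diff[OF intg intg, of "Suc k" k] by simp
  also have "norm \<dots> \<le> integral {0..t} (\<lambda>s. L * (norm (H u0) * L ^ k * s ^ Suc k / fact (Suc k)))"
  proof (rule integral_norm_bound_integral)
    show "(\<lambda>s. L * (norm (H u0) * L ^ k * s ^ Suc k / fact (Suc k))) integrable_on {0..t}"
      by (intro integrable_continuous_real continuous_intros) (auto simp del: fact_Suc)
    fix s assume s: "s \<in> {0..t}"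
    have "norm (H (picard_iter H u0 (Suc k) s) - H (picard_iter H u0 k s))
        \<le> L * norm (picard_iter H u0 (Suc k) s - picard_iter H u0 k s)"
      using lipschitz_on_normD[OF lipschitz] by simp
    also have "\<dots> \<le> L * (norm (H u0) * L ^ k * s ^ Suc k / fact (Suc k))"
      using Suc.IH[of s] s lipschitz_constant_nonneg by (intro mult_left_mono) auto
    finally show "norm (H (picard_iter H u0 (Suc k) s) - H (picard_iter H u0 k s))
        \<le> L * (norm (H u0) * L ^ k * s ^ Suc k / fact (Suc k))" .
  qed (intro integrable_diff intg)
  also have "\<dots> = B t - B 0"
  proof (rule integral_unique, rule fundamental_theorem_of_calculus)
    fix x assume "x \<in> {0..t}"
    show "(B has_vector_derivative L * (norm (H u0) * L ^ k * x ^ Suc k / fact (Suc k)))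
        (at x within {0..t})"
      unfolding B_def has_real_derivative_iff_has_vector_derivative[symmetric]
      by (rule derivative_eq_intros refl | simp)+
  qed (use Suc.prems in simp)
  finally show ?case by (simp add: B_def)
qed

lemma picard_iter_uniformly_convergent:
  obtains u where "\<And>T. uniform_limit {0..T} (picard_iter H u0) u sequentially"
proof
  define d where "d k t = picard_iter H u0 (Suc k) t - picard_iter H u0 k t" for k t
  define M where "M = norm (H u0)"
  have telescope: "picard_iter H u0 n t = u0 + (\<Sum>k<n. d k t)" for n t
    using sum_lessThan_telescope[of "\<lambda>k. picard_iter H u0 k t" n] by (simp add: d_def)
  fix T :: real
  have "uniform_limit {0..T} (\<lambda>n t. \<Sum>k<n. d k t) (\<lambda>t. \<Sum>k. d k t) sequentially"
  proof (rule Weierstrass_m_test)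
    fix k t assume t: "t \<in> {0..T}"
    have "norm (d k t) \<le> M * L ^ k * t ^ Suc k / fact (Suc k)"
      using picard_iter_step_bound[of t k] t by (simp add: d_def M_def)
    also have "\<dots> \<le> M * L ^ k * T ^ Suc k / fact k"
      using t lipschitz_constant_nonneg by (intro frac_le mult_left_mono power_mono fact_mono)
        (auto simp: M_def simp del: fact_Suc)
    also have "\<dots> = M * T * (inverse (fact k) * (L * T) ^ k)"
      by (simp add: field_simps power_mult_distrib)
    finally show "norm (d k t) \<le> M * T * (inverse (fact k) * (L * T) ^ k)" .
  qed (intro summable_mult summable_exp)
  then show "uniform_limit {0..T} (picard_iter H u0) (\<lambda>t. u0 + (\<Sum>k. d k t)) sequentially"
    unfolding telescope by (intro uniform_limit_add uniform_limit_const)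
qed

lemma picard_limit_integral_equation:
  assumes lim: "\<And>T. uniform_limit {0..T} (picard_iter H u0) u sequentially" and t: "t \<ge> 0"
  shows "u t = u0 + integral {0..t} (\<lambda>s. H (u s))"
proof -
  have "uniform_limit {0..t} (\<lambda>n s. H (picard_iter H u0 n s)) (\<lambda>s. H (u s)) sequentially"
    unfolding uniform_limit_sequentially_iff
  proof (intro allI impI)
    fix e :: real assume "e > 0"
    then obtain N where N: "\<forall>n\<ge>N. \<forall>s\<in>{0..t}. dist (picard_iter H u0 n s) (u s) < e / (L + 1)"
      using lim[of t] lipschitz_constant_nonneg unfolding uniform_limit_sequentially_iff by force
    have "dist (H (picard_iter H u0 n s)) (H (u s)) < e" if "n \<ge> N" "s \<in> {0..t}" for n s
    proof -
      have "dist (H (picard_iter H u0 n s)) (H (u s)) \<le> L * dist (picard_iter H u0 n s) (u s)"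
        using lipschitz_onD[OF lipschitz] by simp
      also have "\<dots> \<le> (L + 1) * dist (picard_iter H u0 n s) (u s)"
        by (simp add: mult_right_mono)
      also have "\<dots> < e"
        using N that lipschitz_constant_nonneg by (simp add: pos_less_divide_eq mult.commute)
      finally show ?thesis .
    qed
    then show "\<exists>N. \<forall>n\<ge>N. \<forall>s\<in>{0..t}. dist (H (picard_iter H u0 n s)) (H (u s)) < e"
      by blast
  qed
  from uniform_limit_integral[OF this continuous_on_field_picard_iter]
  obtain I J where I: "\<And>n. ((\<lambda>s. H (picard_iter H u0 n s)) has_integral I n) {0..t}"
    and J: "((\<lambda>s. H (u s)) has_integral J) {0..t}" and IJ: "I \<longlonglongrightarrow> J"
    by auto
  have "(\<lambda>n. picard_iter H u0 (Suc n) t) \<longlonglongrightarrow> u0 + J"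
    using IJ integral_unique[OF I] by (simp add: tendsto_add)
  moreover have "(\<lambda>n. picard_iter H u0 (Suc n) t) \<longlonglongrightarrow> u t"
    using LIMSEQ_Suc[OF tendsto_uniform_limitI[OF lim[of t]]] t by simp
  ultimately show ?thesis
    using J LIMSEQ_unique by (metis integral_unique)
qed

theorem lipschitz_global_solution_exists:
  "\<exists>u. u 0 = u0 \<and> (\<forall>t\<ge>0. (u has_vector_derivative H (u t)) (at t within {0..}))"
proof -
  obtain u where lim: "\<And>T. uniform_limit {0..T} (picard_iter H u0) u sequentially"
    using picard_iter_uniformly_convergent by blast
  have eq: "u t = u0 + integral {0..t} (\<lambda>s. H (u s))" if "t \<ge> 0" for t
    using picard_limit_integral_equation[OF lim that] .
  have "continuous_on {0..T} u" for T
    by (rule uniform_limit_theorem[OF _ lim]) (auto intro: always_eventually continuous_on_picard_iter)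
  then have cont: "continuous_on {0..T} (\<lambda>s. H (u s))" for T
    using continuous_on_compose[OF _ continuous_on_field, of _ u] by (simp add: o_def)
  have "(u has_vector_derivative H (u t)) (at t within {0..})" if t: "t \<ge> 0" for t
  proof -
    have "((\<lambda>s. u0 + integral {0..s} (\<lambda>s. H (u s))) has_vector_derivative H (u t))
        (at t within {0..t+1})"
      using integral_has_vector_derivative[OF cont, of t "t + 1"] t
      by (auto intro!: derivative_eq_intros)
    then have "(u has_vector_derivative H (u t)) (at t within {0..t+1})"
      by (rule has_vector_derivative_transform[rotated 2]) (use t eq in auto)
    moreover have "at t within {0..t+1} = at t within {0..}"
      by (rule at_within_nhd[of t "{..<t+1}"]) auto
    ultimately show ?thesis by simp
  qed
  moreover have "u 0 = u0" using eq[of 0] by simp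
  ultimately show ?thesis by blast
qed

end

lemma stays_positive:
  fixes \<phi> \<phi>' :: "real \<Rightarrow> real"
  assumes deriv: "\<And>t. t \<ge> 0 \<Longrightarrow> (\<phi> has_real_derivative \<phi>' t) (at t within {0..})"
    and init: "\<phi> 0 > 0"
    and barrier: "\<And>t. t > 0 \<Longrightarrow> \<phi> t = 0 \<Longrightarrow> \<phi>' t > 0"
    and "T \<ge> 0"
  shows "\<phi> T > 0"
proof (rule ccontr)
  assume "\<not> \<phi> T > 0"
  have cont: "continuous_on {a..b} \<phi>" if "a \<ge> 0" for a b
    by (rule DERIV_continuous_on[OF DERIV_subset[OF deriv]]) (use that in auto)
  define Z where "Z = {s \<in> {0..T}. \<phi> s = 0}"
  have "Z \<noteq> {}"
    using IVT2'[of \<phi> T 0 0, OF _ _ \<open>T \<ge> 0\<close> cont] \<open>\<not> \<phi> T > 0\<close> init unfolding Z_def by force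
  moreover have bdd: "bdd_below Z" unfolding Z_def by (auto intro: bdd_belowI[of _ 0])
  moreover have "closed Z" unfolding Z_def
    by (rule continuous_closed_preimage_constant[OF cont]) auto
  ultimately have "Inf Z \<in> Z" by (rule closed_contains_Inf)
  define t1 where "t1 = Inf Z"
  have t1: "\<phi> t1 = 0" "t1 \<ge> 0" using \<open>Inf Z \<in> Z\<close> unfolding t1_def Z_def by auto
  then have "t1 > 0" using init by (cases "t1 = 0") auto
  have before: "\<phi> s > 0" if "0 \<le> s" "s < t1" for s
  proof (rule ccontr)
    assume "\<not> \<phi> s > 0"
    then obtain x where "0 \<le> x" "x \<le> s" "\<phi> x = 0"
      using IVT2'[of \<phi> s 0 0, OF _ _ \<open>0 \<le> s\<close> cont] init by force
    then have "x \<in> Z" using that t1 \<open>Inf Z \<in> Z\<close> unfolding Z_def t1_def by auto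
    then have "t1 \<le> x" unfolding t1_def by (rule cInf_lower[OF _ bdd])
    then show False using \<open>x \<le> s\<close> \<open>s < t1\<close> by simp
  qed
  have "at t1 within {0..} = at t1"
    by (rule at_within_interior) (use \<open>t1 > 0\<close> in simp)
  then have "DERIV \<phi> t1 :> \<phi>' t1" using deriv[OF t1(2)] by simp
  then obtain d where "d > 0" and d: "\<And>h. h > 0 \<Longrightarrow> h < d \<Longrightarrow> \<phi> (t1 - h) < \<phi> t1"
    using DERIV_pos_inc_left barrier[OF \<open>t1 > 0\<close> t1(1)] by blast
  define h where "h = min (d/2) (t1/2)"
  have "\<phi> (t1 - h) < 0" using d[of h] \<open>d > 0\<close> \<open>t1 > 0\<close> t1(1) by (simp add: h_def)
  moreover have "\<phi> (t1 - h) > 0" using before[of "t1 - h"] \<open>t1 > 0\<close> \<open>d > 0\<close> by (simp add: h_def)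
  ultimately show False by simp
qed

lemma gronwall_zero:
  fixes D D' :: "real \<Rightarrow> real"
  assumes deriv: "\<And>s. s \<in> {a..b} \<Longrightarrow> (D has_real_derivative D' s) (at s within {a..b})"
    and growth: "\<And>s. s \<in> {a..b} \<Longrightarrow> D' s \<le> C * D s"
    and nonneg: "\<And>s. s \<in> {a..b} \<Longrightarrow> D s \<ge> 0"
    and "D a = 0" and t: "t \<in> {a..b}"
  shows "D t = 0"
proof -
  define g where "g s = D s * exp (- C * s)" for s
  define g' where "g' s = (D' s - C * D s) * exp (- C * s)" for s
  have g: "(g has_derivative (*) (g' s)) (at s within {a..t})" if "a \<le> s" "s \<le> t" for s
  proof -
    have "(D has_real_derivative D' s) (at s within {a..t})"
      by (rule DERIV_subset[OF deriv]) (use that t in auto)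
    then have "(g has_real_derivative g' s) (at s within {a..t})"
      unfolding g_def[abs_def] g'_def by (auto intro!: derivative_eq_intros simp: algebra_simps)
    then show ?thesis by (simp add: has_field_derivative_def)
  qed
  then obtain \<xi> where \<xi>: "\<xi> \<in> {a..t}" "g t - g a = g' \<xi> * (t - a)"
    using mvt_very_simple[OF _ g] t by auto
  have "g' \<xi> \<le> 0"
    using growth[of \<xi>] \<xi>(1) t by (simp add: g'_def mult_nonpos_nonneg)
  then have "g t \<le> 0"
    using \<xi> t \<open>D a = 0\<close> by (simp add: g_def mult_nonpos_nonneg)
  then show ?thesis using nonneg[OF t] by (simp add: g_def mult_le_0_iff)
qed

lemma local_lipschitz_ball:
  assumes "open U" and "local_lipschitz T U (\<lambda>_. f)" and "t \<in> T" "x \<in> U"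
  obtains r L where "r > 0" "ball x r \<subseteq> U" "L-lipschitz_on (ball x r) f"
proof -
  obtain r L where "r > 0" and L: "L-lipschitz_on (cball x r \<inter> U) f"
    using local_lipschitzE[OF assms(2-4)] assms(3) by (metis centre_in_cball IntI less_imp_le)
  obtain e where "e > 0" "ball x e \<subseteq> U" using assms(1,4) open_contains_ball by blast
  have "ball x (min e r) \<subseteq> cball x r \<inter> U" using \<open>ball x e \<subseteq> U\<close> by auto
  then show ?thesis
    using that[of "min e r" L] \<open>e > 0\<close> \<open>r > 0\<close> \<open>ball x e \<subseteq> U\<close> lipschitz_on_subset[OF L] by auto
qed

lemma solutions_agree_on_interval:
  fixes f :: "'a::real_inner \<Rightarrow> 'a" and u v :: "real \<Rightarrow> 'a"
  assumes L: "L-lipschitz_on S f"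
    and u: "\<And>s. s \<in> {a..b} \<Longrightarrow> (u has_vector_derivative f (u s)) (at s within {a..b})"
    and v: "\<And>s. s \<in> {a..b} \<Longrightarrow> (v has_vector_derivative f (v s)) (at s within {a..b})"
    and in_S: "\<And>s. s \<in> {a..b} \<Longrightarrow> u s \<in> S \<and> v s \<in> S"
    and "v a = u a" and "t \<in> {a..b}"
  shows "v t = u t"
proof -
  define D where "D s = inner (v s - u s) (v s - u s)" for s
  have "D t = 0"
  proof (rule gronwall_zero[where D = D and a = a and b = b and C = "2 * L"])
    fix s assume s: "s \<in> {a..b}"
    show "(D has_real_derivative 2 * inner (v s - u s) (f (v s) - f (u s))) (at s within {a..b})"
      using u[OF s] v[OF s] unfolding D_def[abs_def] has_vector_derivative_def
      by (auto intro!: derivative_eq_intros simp: has_field_derivative_def inner_commute algebra_simps)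
    have "2 * inner (v s - u s) (f (v s) - f (u s)) \<le> 2 * (norm (v s - u s) * norm (f (v s) - f (u s)))"
      using norm_cauchy_schwarz by simp
    also have "\<dots> \<le> 2 * (norm (v s - u s) * (L * norm (v s - u s)))"
      using lipschitz_on_normD[OF L] in_S[OF s] by (simp add: mult_left_mono)
    also have "\<dots> = 2 * L * D s" by (simp add: D_def power2_norm_eq_inner[symmetric] power2_eq_square)
    finally show "2 * inner (v s - u s) (f (v s) - f (u s)) \<le> 2 * L * D s" .
  qed (use \<open>v a = u a\<close> \<open>t \<in> {a..b}\<close> in \<open>auto simp: D_def\<close>)
  then show ?thesis by (simp add: D_def)
qed

lemma agreement_propagates:
  fixes u v :: "real \<Rightarrow> 'a::real_normed_vector"
  assumes cont: "\<And>b. continuous_on {0..b} u" "\<And>b. continuous_on {0..b} v"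
    and step: "\<And>t. t \<ge> 0 \<Longrightarrow> v t = u t \<Longrightarrow> \<exists>h>0. \<forall>s\<in>{t..t + h}. v s = u s"
    and "v 0 = u 0" and "T \<ge> 0"
  shows "v T = u T"
proof -
  define S where "S = {s. s \<ge> 0 \<and> v s \<noteq> u s}"
  have "S = {}"
  proof (rule ccontr)
    assume "S \<noteq> {}"
    have bdd: "bdd_below S" by (auto simp: S_def intro!: bdd_belowI[of _ 0])
    define t1 where "t1 = Inf S"
    have "t1 \<ge> 0" unfolding t1_def by (rule cInf_greatest[OF \<open>S \<noteq> {}\<close>]) (auto simp: S_def)
    have "v t1 = u t1"
    proof (cases "t1 = 0")
      case True
      then show ?thesis using \<open>v 0 = u 0\<close> by simp
    next
      case False
      have "closed {s \<in> {0..t1}. v s - u s = 0}"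
        using cont by (intro continuous_closed_preimage_constant continuous_intros) auto
      moreover have "{0..<t1} \<subseteq> {s \<in> {0..t1}. v s - u s = 0}"
        using cInf_lower[OF _ bdd] by (force simp: S_def t1_def)
      ultimately have "closure {0..<t1} \<subseteq> {s \<in> {0..t1}. v s - u s = 0}"
        by (rule closure_minimal[rotated])
      then show ?thesis using False \<open>t1 \<ge> 0\<close> by auto
    qed
    then obtain h where "h > 0" and agree: "\<And>s. s \<in> {t1..t1 + h} \<Longrightarrow> v s = u s"
      using step \<open>t1 \<ge> 0\<close> by blast
    have "t1 + h \<le> Inf S"
    proof (rule cInf_greatest[OF \<open>S \<noteq> {}\<close>])
      fix s assume "s \<in> S"
      then have "t1 \<le> s" "v s \<noteq> u s" using cInf_lower[OF _ bdd] by (auto simp: S_def t1_def)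
      then show "t1 + h \<le> s" using agree by force
    qed
    then show False using \<open>h > 0\<close> by (simp add: t1_def)
  qed
  then show ?thesis using \<open>T \<ge> 0\<close> by (auto simp: S_def)
qed

lemma solutions_agree_locally_lipschitz:
  fixes f :: "'a::real_inner \<Rightarrow> 'a" and u v v' :: "real \<Rightarrow> 'a"
  assumes "open U" and lip: "local_lipschitz (UNIV :: real set) U (\<lambda>_. f)"
    and u: "\<And>t. t \<ge> 0 \<Longrightarrow> (u has_vector_derivative f (u t)) (at t within {0..})"
    and u_in: "\<And>t. t \<ge> 0 \<Longrightarrow> u t \<in> U"
    and v: "\<And>t. t \<ge> 0 \<Longrightarrow> (v has_vector_derivative v' t) (at t within {0..})"
    and v': "\<And>t. t \<ge> 0 \<Longrightarrow> v t \<in> U \<Longrightarrow> v' t = f (v t)"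
    and "v 0 = u 0" and "T \<ge> 0"
  shows "v T = u T"
proof (rule agreement_propagates)
  show "continuous_on {0..b} u" "continuous_on {0..b} v" for b
    by (auto intro!: continuous_on_vector_derivative
        has_vector_derivative_within_subset[OF u] has_vector_derivative_within_subset[OF v])
  fix t :: real assume "t \<ge> 0" "v t = u t"
  obtain r L where "r > 0" and ball: "ball (u t) r \<subseteq> U" and L: "L-lipschitz_on (ball (u t) r) f"
    using local_lipschitz_ball[OF \<open>open U\<close> lip UNIV_I u_in[OF \<open>t \<ge> 0\<close>]] by blast
  have "(u \<longlongrightarrow> u t) (at t within {0..})" "(v \<longlongrightarrow> v t) (at t within {0..})"
    using has_vector_derivative_continuous[OF u] has_vector_derivative_continuous[OF v] \<open>t \<ge> 0\<close>
    by (simp_all add: continuous_within)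
  then have "\<forall>\<^sub>F s in at t within {0..}. u s \<in> ball (u t) r \<and> v s \<in> ball (u t) r"
    using \<open>r > 0\<close> \<open>v t = u t\<close>
    by (auto intro!: eventually_conj dest: tendstoD simp: dist_commute mem_ball)
  then obtain d where "d > 0" and d: "\<And>s. s \<ge> 0 \<Longrightarrow> s \<noteq> t \<Longrightarrow> dist s t < d \<Longrightarrow>
      u s \<in> ball (u t) r \<and> v s \<in> ball (u t) r"
    unfolding eventually_at by auto
  have near: "u s \<in> ball (u t) r \<and> v s \<in> ball (u t) r" if "s \<in> {t..t + d / 2}" for s
    using d[of s] that \<open>t \<ge> 0\<close> \<open>d > 0\<close> \<open>r > 0\<close> \<open>v t = u t\<close> by (cases "s = t") (auto simp: dist_real_def)
  have "v s = u s" if "s \<in> {t..t + d / 2}" for s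
  proof (rule solutions_agree_on_interval[where a = t and b = "t + d / 2" and u = u and v = v,
        OF L _ _ near \<open>v t = u t\<close> that])
    fix s assume s: "s \<in> {t..t + d / 2}"
    show "(u has_vector_derivative f (u s)) (at s within {t..t + d / 2})"
      by (rule has_vector_derivative_within_subset[OF u]) (use s \<open>t \<ge> 0\<close> in auto)
    have "v' s = f (v s)" using v' near[OF s] ball s \<open>t \<ge> 0\<close> by auto
    then show "(v has_vector_derivative f (v s)) (at s within {t..t + d / 2})"
      using has_vector_derivative_within_subset[OF v, of s "{t..t + d / 2}"] s \<open>t \<ge> 0\<close> by auto
  qed
  then show "\<exists>h>0. \<forall>s\<in>{t..t + h}. v s = u s" using \<open>d > 0\<close> by (intro exI[of _ "d / 2"]) auto
qed (use \<open>v 0 = u 0\<close> \<open>T \<ge> 0\<close> in auto)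

section \<open>Bounded Lipschitz functions\<close>

definition bounded_lipschitz_on :: "'a::metric_space set \<Rightarrow> ('a \<Rightarrow> real) \<Rightarrow> bool" where
  "bounded_lipschitz_on S f \<longleftrightarrow> (\<exists>B. \<forall>x\<in>S. \<bar>f x\<bar> \<le> B) \<and> (\<exists>L. L-lipschitz_on S f)"

lemma bounded_lipschitz_on_const: "bounded_lipschitz_on S (\<lambda>x. c)"
  unfolding bounded_lipschitz_on_def by (blast intro: lipschitz_on_constant)

lemma bounded_lipschitz_on_add:
  assumes "bounded_lipschitz_on S f" "bounded_lipschitz_on S g"
  shows "bounded_lipschitz_on S (\<lambda>x. f x + g x)"
proof -
  obtain A B C D where "\<forall>x\<in>S. \<bar>f x\<bar> \<le> A" "\<forall>x\<in>S. \<bar>g x\<bar> \<le> B"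
    and "C-lipschitz_on S f" "D-lipschitz_on S g"
    using assms unfolding bounded_lipschitz_on_def by blast
  then have "\<forall>x\<in>S. \<bar>f x + g x\<bar> \<le> A + B" "(C + D)-lipschitz_on S (\<lambda>x. f x + g x)"
    by (auto intro: lipschitz_on_add abs_triangle_ineq[THEN order_trans] add_mono)
  then show ?thesis unfolding bounded_lipschitz_on_def by blast
qed

lemma bounded_lipschitz_on_uminus:
  "bounded_lipschitz_on S f \<Longrightarrow> bounded_lipschitz_on S (\<lambda>x. - f x)"
  unfolding bounded_lipschitz_on_def by (auto intro: lipschitz_on_minus)

lemma bounded_lipschitz_on_diff:
  "bounded_lipschitz_on S f \<Longrightarrow> bounded_lipschitz_on S g \<Longrightarrow> bounded_lipschitz_on S (\<lambda>x. f x - g x)"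
  using bounded_lipschitz_on_add[OF _ bounded_lipschitz_on_uminus, of S f g] by simp

lemma bounded_lipschitz_on_mult:
  assumes "bounded_lipschitz_on S f" "bounded_lipschitz_on S g"
  shows "bounded_lipschitz_on S (\<lambda>x. f x * g x)"
proof -
  obtain A B C D where A: "\<forall>x\<in>S. \<bar>f x\<bar> \<le> A" and B: "\<forall>x\<in>S. \<bar>g x\<bar> \<le> B"
    and C: "C-lipschitz_on S f" and D: "D-lipschitz_on S g"
    using assms unfolding bounded_lipschitz_on_def by blast
  have "\<bar>f x * g x\<bar> \<le> A * B" if "x \<in> S" for x
    unfolding abs_mult using A B that by (intro mult_mono) auto
  moreover have "(\<bar>A\<bar> * D + \<bar>B\<bar> * C)-lipschitz_on S (\<lambda>x. f x * g x)"
  proof (rule lipschitz_onI)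
    fix x y assume xy: "x \<in> S" "y \<in> S"
    have "\<bar>f x * g x - f y * g y\<bar> = \<bar>f x * (g x - g y) + g y * (f x - f y)\<bar>"
      by (simp add: algebra_simps)
    also have "\<dots> \<le> \<bar>f x\<bar> * \<bar>g x - g y\<bar> + \<bar>g y\<bar> * \<bar>f x - f y\<bar>"
      by (metis abs_mult abs_triangle_ineq)
    also have "\<dots> \<le> \<bar>A\<bar> * (D * dist x y) + \<bar>B\<bar> * (C * dist x y)"
      using A B xy lipschitz_onD[OF C xy] lipschitz_onD[OF D xy]
      by (intro add_mono mult_mono) (auto simp: dist_real_def)
    finally show "dist (f x * g x) (f y * g y) \<le> (\<bar>A\<bar> * D + \<bar>B\<bar> * C) * dist x y"
      by (simp add: dist_real_def algebra_simps)
  qed (use lipschitz_on_nonneg[OF C] lipschitz_on_nonneg[OF D] in simp)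
  ultimately show ?thesis unfolding bounded_lipschitz_on_def by blast
qed

lemma bounded_lipschitz_on_inverse:
  assumes "bounded_lipschitz_on S f" and "\<delta> > 0" and ge: "\<And>x. x \<in> S \<Longrightarrow> f x \<ge> \<delta>"
  shows "bounded_lipschitz_on S (\<lambda>x. 1 / f x)"
proof -
  obtain C where C: "C-lipschitz_on S f" using assms unfolding bounded_lipschitz_on_def by blast
  have "\<bar>1 / f x\<bar> \<le> 1 / \<delta>" if "x \<in> S" for x
    using ge[OF that] \<open>\<delta> > 0\<close> by (simp add: frac_le)
  moreover have "(C / \<delta>\<^sup>2)-lipschitz_on S (\<lambda>x. 1 / f x)"
  proof (rule lipschitz_onI)
    fix x y assume xy: "x \<in> S" "y \<in> S"
    have pos: "f x \<ge> \<delta>" "f y \<ge> \<delta>" using ge xy by auto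
    have "dist (1 / f x) (1 / f y) = dist (f x) (f y) / (f x * f y)"
      using pos \<open>\<delta> > 0\<close> by (simp add: dist_real_def field_simps abs_minus_commute)
    also have "\<dots> \<le> C * dist x y / \<delta>\<^sup>2"
      using pos \<open>\<delta> > 0\<close> lipschitz_onD[OF C xy] lipschitz_on_nonneg[OF C]
      by (intro frac_le) (auto simp: power2_eq_square intro: mult_mono)
    finally show "dist (1 / f x) (1 / f y) \<le> C / \<delta>\<^sup>2 * dist x y" by simp
  qed (use lipschitz_on_nonneg[OF C] in simp)
  ultimately show ?thesis unfolding bounded_lipschitz_on_def by blast
qed

lemma bounded_lipschitz_on_compose:
  assumes "bounded_lipschitz_on T g" "C-lipschitz_on S \<phi>" "\<phi> ` S \<subseteq> T"
  shows "bounded_lipschitz_on S (\<lambda>x. g (\<phi> x))"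
proof -
  obtain B L where "\<forall>y\<in>T. \<bar>g y\<bar> \<le> B" "L-lipschitz_on T g"
    using assms(1) unfolding bounded_lipschitz_on_def by blast
  then have "\<forall>x\<in>S. \<bar>g (\<phi> x)\<bar> \<le> B" "(L * C)-lipschitz_on S (\<lambda>x. g (\<phi> x))"
    using assms(2,3) by (auto intro: lipschitz_on_compose2 lipschitz_on_subset)
  then show ?thesis unfolding bounded_lipschitz_on_def by blast
qed

lemma bounded_lipschitz_on_compose_linear:
  assumes "bounded_lipschitz_on UNIV g" "bounded_linear \<phi>"
  shows "bounded_lipschitz_on S (\<lambda>x. g (\<phi> x))"
proof -
  obtain C where "C-lipschitz_on S \<phi>" using bounded_linear.lipschitz_boundE[OF assms(2)] by blast
  then show ?thesis using bounded_lipschitz_on_compose[OF assms(1)] by blast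
qed

lemma bounded_lipschitz_on_linear:
  assumes "bounded_linear \<phi>" "bounded S"
  shows "bounded_lipschitz_on S \<phi>"
proof -
  obtain L where "L-lipschitz_on S \<phi>"
    using bounded_linear.lipschitz_boundE[OF assms(1)] by blast
  moreover obtain B where "\<forall>x\<in>S. norm (\<phi> x) \<le> B"
    using bounded_linear_image[OF assms(2,1)] unfolding bounded_iff by blast
  ultimately show ?thesis unfolding bounded_lipschitz_on_def by auto
qed

definition clipped_exp :: "real \<Rightarrow> real \<Rightarrow> real" where
  "clipped_exp c x = exp (min x c)"

lemma bounded_lipschitz_on_clipped_exp: "bounded_lipschitz_on UNIV (clipped_exp c)"
proof -
  have "(exp c)-lipschitz_on UNIV (clipped_exp c)"
  proof (rule lipschitz_on_leI)
    fix x y :: real assume "x \<le> y"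
    define a b where "a = min x c" and "b = min y c"
    have "a \<le> b" "b \<le> c" "b - a \<le> y - x" using \<open>x \<le> y\<close> by (auto simp: a_def b_def)
    have "exp b * (1 + (a - b)) \<le> exp b * exp (a - b)"
      by (rule mult_left_mono[OF exp_ge_add_one_self]) simp
    then have "exp b - exp a \<le> exp b * (b - a)"
      by (simp add: exp_diff algebra_simps)
    also have "\<dots> \<le> exp c * (y - x)"
      using \<open>a \<le> b\<close> \<open>b \<le> c\<close> \<open>b - a \<le> y - x\<close> by (intro mult_mono) auto
    finally show "dist (clipped_exp c x) (clipped_exp c y) \<le> exp c * dist x y"
      using \<open>a \<le> b\<close> \<open>x \<le> y\<close> by (simp add: dist_real_def clipped_exp_def a_def b_def)
  qed simp
  moreover have "\<forall>x. \<bar>clipped_exp c x\<bar> \<le> exp c" by (simp add: clipped_exp_def)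
  ultimately show ?thesis unfolding bounded_lipschitz_on_def by blast
qed

lemma lipschitz_on_triple:
  assumes "bounded_lipschitz_on S f" "bounded_lipschitz_on S g" "bounded_lipschitz_on S h"
  obtains L where "L-lipschitz_on S (\<lambda>x. (f x, g x, h x))"
proof -
  obtain A B C where "A-lipschitz_on S f" "B-lipschitz_on S g" "C-lipschitz_on S h"
    using assms unfolding bounded_lipschitz_on_def by blast
  then show ?thesis by (meson that lipschitz_on_Pair)
qed

section \<open>The reduced system\<close>

definition reduced_field :: "nat \<Rightarrow> real \<Rightarrow> real \<Rightarrow> real \<times> real \<times> real \<Rightarrow> real \<times> real \<times> real" where
  "reduced_field \<kappa> \<alpha> \<beta> = (\<lambda>(p, q, e). let m = \<beta> * (real \<kappa> - 1) / real \<kappa> in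
     (2 - 2 * (\<alpha> + \<beta>) * p + 2 * m * e,
      2 - 2 * (\<alpha> - \<beta>) * q - 2 * m * e,
      2 - 2 * \<alpha> * e - m * e\<^sup>2 / q + m * e\<^sup>2 / p))"

lemma local_lipschitz_reduced_field:
  "local_lipschitz (UNIV :: real set) {w. 0 < fst w \<and> 0 < fst (snd w)} (\<lambda>_. reduced_field \<kappa> \<alpha> \<beta>)"
proof (rule local_lipschitzI)
  fix t :: real and x :: "real \<times> real \<times> real"
  assume "x \<in> {w. 0 < fst w \<and> 0 < fst (snd w)}"
  define r where "r = min (fst x) (fst (snd x)) / 2"
  have "r > 0" using \<open>x \<in> _\<close> by (simp add: r_def)
  define m where "m = \<beta> * (real \<kappa> - 1) / real \<kappa>"
  let ?S = "cball x r"
  have coord: "bounded_lipschitz_on ?S fst" "bounded_lipschitz_on ?S (\<lambda>w. fst (snd w))"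
    "bounded_lipschitz_on ?S (\<lambda>w. snd (snd w))"
    by (auto intro!: bounded_lipschitz_on_linear bounded_linear_compose[OF bounded_linear_fst]
        bounded_linear_compose[OF bounded_linear_snd] bounded_linear_fst bounded_linear_snd)
  have far: "fst w \<ge> r" "fst (snd w) \<ge> r" if "w \<in> ?S" for w
  proof -
    have "dist x w \<le> r" using that by simp
    then have "dist (fst x) (fst w) \<le> r" "dist (fst (snd x)) (fst (snd w)) \<le> r"
      using dist_fst_le[of x w] dist_fst_le[of "snd x" "snd w"] dist_snd_le[of x w] by linarith+
    moreover have "2 * r \<le> fst x" "2 * r \<le> fst (snd x)" by (simp_all add: r_def)
    ultimately show "fst w \<ge> r" "fst (snd w) \<ge> r"
      by (simp_all add: dist_real_def abs_le_iff)
  qed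
  have inverse: "bounded_lipschitz_on ?S (\<lambda>w. 1 / fst w)"
    "bounded_lipschitz_on ?S (\<lambda>w. 1 / fst (snd w))"
    using far \<open>r > 0\<close> by (auto intro: bounded_lipschitz_on_inverse coord)
  have field: "reduced_field \<kappa> \<alpha> \<beta> = (\<lambda>w.
      (2 - 2 * (\<alpha> + \<beta>) * fst w + 2 * m * snd (snd w),
       2 - 2 * (\<alpha> - \<beta>) * fst (snd w) - 2 * m * snd (snd w),
       2 - 2 * \<alpha> * snd (snd w) - m * snd (snd w) * snd (snd w) * (1 / fst (snd w))
         + m * snd (snd w) * snd (snd w) * (1 / fst w)))"
    by (simp add: fun_eq_iff reduced_field_def m_def split_beta' Let_def power2_eq_square)
  have "bounded_lipschitz_on ?S (\<lambda>w. 2 - 2 * (\<alpha> + \<beta>) * fst w + 2 * m * snd (snd w))"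
    "bounded_lipschitz_on ?S (\<lambda>w. 2 - 2 * (\<alpha> - \<beta>) * fst (snd w) - 2 * m * snd (snd w))"
    "bounded_lipschitz_on ?S (\<lambda>w. 2 - 2 * \<alpha> * snd (snd w)
       - m * snd (snd w) * snd (snd w) * (1 / fst (snd w))
       + m * snd (snd w) * snd (snd w) * (1 / fst w))"
    by (intro bounded_lipschitz_on_add bounded_lipschitz_on_diff bounded_lipschitz_on_mult
        bounded_lipschitz_on_const coord inverse)+
  then obtain L where "L-lipschitz_on ?S (reduced_field \<kappa> \<alpha> \<beta>)"
    unfolding field by (rule lipschitz_on_triple)
  then show "\<exists>u>0. \<exists>L. \<forall>t\<in>cball t u \<inter> UNIV.
      L-lipschitz_on (cball x u \<inter> {w. 0 < fst w \<and> 0 < fst (snd w)}) (reduced_field \<kappa> \<alpha> \<beta>)"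
    using \<open>r > 0\<close> by (blast intro: lipschitz_on_subset)
qed

definition pos_def_region :: "nat \<Rightarrow> (real \<times> real \<times> real) set" where
  "pos_def_region \<kappa> =
     {(p, q, e). 0 < p \<and> 0 < q \<and> 0 < e \<and> (real \<kappa> - 1) * e * (p + q) < 2 * real \<kappa> * p * q}"

lemma pos_def_region_subset: "pos_def_region \<kappa> \<subseteq> {w. 0 < fst w \<and> 0 < fst (snd w)}"
  by (auto simp: pos_def_region_def)

(* The logarithmic derivatives x'/x, y'/y, z'/z of x = e/p, y = e/q, z = 1/e
   along the reduced system. *)
definition growth_rates :: "nat \<Rightarrow> real \<Rightarrow> real \<Rightarrow> real \<Rightarrow> real \<Rightarrow> real \<Rightarrow> real \<times> real \<times> real" where
  "growth_rates \<kappa> \<alpha> \<beta> x y z = (let m = \<beta> * (real \<kappa> - 1) / real \<kappa> in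
     (2 * z * (1 - x) + 2 * \<beta> - m * (x + y),
      2 * z * (1 - y) - 2 * \<beta> + m * (x + y),
      - 2 * z + 2 * \<alpha> + m * (y - x)))"

lemma growth_rates_sum_decreasing:
  assumes "\<kappa> \<ge> 2" "x > 0" "y > 0" "z > 0" "(real \<kappa> - 1) * (x + y) = 2 * real \<kappa>"
    and "growth_rates \<kappa> \<alpha> \<beta> x y z = (r1, r2, r3)"
  shows "x * r1 + y * r2 < 0"
proof -
  define K where "K = 2 * real \<kappa> / (real \<kappa> - 1)"
  define m where "m = \<beta> * (real \<kappa> - 1) / real \<kappa>"
  have "K > 2" "x + y = K" using assms(1,5) by (simp_all add: K_def field_simps)
  have "m * (x + y) = \<beta> * ((real \<kappa> - 1) * (x + y)) / real \<kappa>" by (simp add: m_def)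
  then have "m * (x + y) = 2 * \<beta>" using assms(1,5) by simp
  then have "r1 = 2 * z * (1 - x)" "r2 = 2 * z * (1 - y)"
    using assms(6) by (auto simp: growth_rates_def Let_def m_def[symmetric])
  then have "x * r1 + y * r2 = 2 * z * (x + y - x\<^sup>2 - y\<^sup>2)"
    by (simp only:) (simp add: power2_eq_square algebra_simps)
  also have "\<dots> < 0"
  proof -
    have "(x + y)\<^sup>2 \<le> 2 * (x\<^sup>2 + y\<^sup>2)" using sum_squares_ge_zero[of "x - y" 0]
      by (simp add: power2_eq_square algebra_simps)
    moreover have "2 * K < K\<^sup>2" using \<open>K > 2\<close> by (simp add: power2_eq_square)
    ultimately have "x + y < x\<^sup>2 + y\<^sup>2" using \<open>x + y = K\<close> by simp
    then show ?thesis using \<open>z > 0\<close> by (simp add: mult_pos_neg)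
  qed
  finally show ?thesis .
qed

definition clipped_growth_field ::
    "nat \<Rightarrow> real \<Rightarrow> real \<Rightarrow> real \<Rightarrow> real \<Rightarrow> real \<times> real \<times> real \<Rightarrow> real \<times> real \<times> real" where
  "clipped_growth_field \<kappa> \<alpha> \<beta> c d = (\<lambda>(X, Y, W).
     growth_rates \<kappa> \<alpha> \<beta> (clipped_exp c X) (clipped_exp c Y) (clipped_exp d W))"

lemma lipschitz_clipped_growth_field:
  obtains L where "L-lipschitz_on UNIV (clipped_growth_field \<kappa> \<alpha> \<beta> c d)"
proof -
  have "bounded_linear (fst :: real \<times> real \<times> real \<Rightarrow> real)"
    "bounded_linear (\<lambda>\<xi> :: real \<times> real \<times> real. fst (snd \<xi>))"
    "bounded_linear (\<lambda>\<xi> :: real \<times> real \<times> real. snd (snd \<xi>))"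
    by (auto intro: bounded_linear_fst bounded_linear_snd bounded_linear_compose)
  note coords = this[THEN bounded_lipschitz_on_compose_linear[OF bounded_lipschitz_on_clipped_exp]]
  have "bounded_lipschitz_on UNIV (\<lambda>\<xi>. fst (clipped_growth_field \<kappa> \<alpha> \<beta> c d \<xi>))"
    "bounded_lipschitz_on UNIV (\<lambda>\<xi>. fst (snd (clipped_growth_field \<kappa> \<alpha> \<beta> c d \<xi>)))"
    "bounded_lipschitz_on UNIV (\<lambda>\<xi>. snd (snd (clipped_growth_field \<kappa> \<alpha> \<beta> c d \<xi>)))"
    unfolding clipped_growth_field_def growth_rates_def Let_def split_beta' fst_conv snd_conv
    by (intro bounded_lipschitz_on_add bounded_lipschitz_on_diff bounded_lipschitz_on_mult
        bounded_lipschitz_on_const coords)+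
  then obtain L where "L-lipschitz_on UNIV (\<lambda>\<xi>. (fst (clipped_growth_field \<kappa> \<alpha> \<beta> c d \<xi>),
      fst (snd (clipped_growth_field \<kappa> \<alpha> \<beta> c d \<xi>)), snd (snd (clipped_growth_field \<kappa> \<alpha> \<beta> c d \<xi>))))"
    by (rule lipschitz_on_triple)
  then show ?thesis by (intro that) simp
qed

lemma clipped_growth_z_bound:
  assumes "\<kappa> \<ge> 2" and K: "K = 2 * real \<kappa> / (real \<kappa> - 1)" and "Z > \<bar>\<alpha>\<bar> + \<bar>\<beta>\<bar>"
    and dW: "\<And>t. t \<ge> 0 \<Longrightarrow> (W has_real_derivative
      snd (snd (clipped_growth_field \<kappa> \<alpha> \<beta> (ln K) (ln Z) (X t, Y t, W t)))) (at t within {0..})"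
    and "W 0 < ln Z" and "t \<ge> 0"
  shows "W t < ln Z"
proof -
  define m where "m = \<beta> * (real \<kappa> - 1) / real \<kappa>"
  have "K > 0" using assms(1) by (simp add: K)
  have "Z > 0" using \<open>Z > \<bar>\<alpha>\<bar> + \<bar>\<beta>\<bar>\<close> by (smt (verit) abs_ge_zero)
  have "m * K = 2 * \<beta>" using assms(1) by (simp add: K m_def field_simps)
  then have "\<bar>m\<bar> * K = 2 * \<bar>\<beta>\<bar>" using \<open>K > 0\<close> by (metis abs_mult abs_of_pos abs_numeral)
  have "ln Z - W t > 0"
  proof (rule stays_positive[where \<phi> = "\<lambda>t. ln Z - W t"])
    show "((\<lambda>t. ln Z - W t) has_real_derivative
        - snd (snd (clipped_growth_field \<kappa> \<alpha> \<beta> (ln K) (ln Z) (X t, Y t, W t)))) (at t within {0..})"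
      if "t \<ge> 0" for t
      using dW[OF that] by (auto intro!: derivative_eq_intros)
    fix t assume "ln Z - W t = 0"
    then have "W t = ln Z" by simp
    then have "clipped_exp (ln Z) (W t) = Z" using \<open>Z > 0\<close> by (simp add: clipped_exp_def)
    moreover have "0 < clipped_exp (ln K) x \<and> clipped_exp (ln K) x \<le> K" for x
      using \<open>K > 0\<close> exp_le_cancel_iff[of "min x (ln K)" "ln K"] by (simp add: clipped_exp_def)
    then have "\<bar>clipped_exp (ln K) (Y t) - clipped_exp (ln K) (X t)\<bar> \<le> K"
      by (smt (verit))
    then have "m * (clipped_exp (ln K) (Y t) - clipped_exp (ln K) (X t)) \<le> 2 * \<bar>\<beta>\<bar>"
      using \<open>\<bar>m\<bar> * K = 2 * \<bar>\<beta>\<bar>\<close> by (metis abs_ge_self abs_mult mult_left_mono abs_ge_zero order_trans)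
    ultimately show "- snd (snd (clipped_growth_field \<kappa> \<alpha> \<beta> (ln K) (ln Z) (X t, Y t, W t))) > 0"
      using \<open>Z > \<bar>\<alpha>\<bar> + \<bar>\<beta>\<bar>\<close> abs_ge_self[of \<alpha>]
      by (simp add: clipped_growth_field_def growth_rates_def Let_def m_def[symmetric])
  qed (use \<open>W 0 < ln Z\<close> \<open>t \<ge> 0\<close> in auto)
  then show ?thesis by simp
qed

lemma clipped_growth_xy_bound:
  assumes "\<kappa> \<ge> 2" and K: "K = 2 * real \<kappa> / (real \<kappa> - 1)"
    and dX: "\<And>t. t \<ge> 0 \<Longrightarrow> (X has_real_derivative
      fst (clipped_growth_field \<kappa> \<alpha> \<beta> (ln K) d (X t, Y t, W t))) (at t within {0..})"
    and dY: "\<And>t. t \<ge> 0 \<Longrightarrow> (Y has_real_derivative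
      fst (snd (clipped_growth_field \<kappa> \<alpha> \<beta> (ln K) d (X t, Y t, W t)))) (at t within {0..})"
    and "exp (X 0) + exp (Y 0) < K" and "t \<ge> 0"
  shows "exp (X t) + exp (Y t) < K"
proof -
  let ?G = "\<lambda>t. clipped_growth_field \<kappa> \<alpha> \<beta> (ln K) d (X t, Y t, W t)"
  have "K > 0" using assms(1) by (simp add: K)
  have "K - exp (X t) - exp (Y t) > 0"
  proof (rule stays_positive[where \<phi> = "\<lambda>t. K - exp (X t) - exp (Y t)"])
    show "((\<lambda>t. K - exp (X t) - exp (Y t)) has_real_derivative
        - (exp (X t) * fst (?G t) + exp (Y t) * fst (snd (?G t)))) (at t within {0..})" if "t \<ge> 0" for t
      using dX[OF that] dY[OF that] by (auto intro!: derivative_eq_intros simp: algebra_simps)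
    fix t assume "K - exp (X t) - exp (Y t) = 0"
    then have "exp (X t) + exp (Y t) = K" by simp
    then have "X t \<le> ln K" "Y t \<le> ln K"
      using \<open>K > 0\<close> by (simp_all add: ln_ge_iff) (smt (verit) exp_gt_zero)+
    then have "?G t = growth_rates \<kappa> \<alpha> \<beta> (exp (X t)) (exp (Y t)) (clipped_exp d (W t))"
      by (simp add: clipped_growth_field_def clipped_exp_def)
    moreover have "(real \<kappa> - 1) * (exp (X t) + exp (Y t)) = 2 * real \<kappa>"
      using \<open>exp (X t) + exp (Y t) = K\<close> assms(1) by (simp add: K)
    moreover have "clipped_exp d (W t) > 0" by (simp add: clipped_exp_def)
    ultimately show "- (exp (X t) * fst (?G t) + exp (Y t) * fst (snd (?G t))) > 0"
      using growth_rates_sum_decreasing[OF assms(1) exp_gt_zero exp_gt_zero]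
      by (metis neg_0_less_iff_less prod.collapse)
  qed (use \<open>exp (X 0) + exp (Y 0) < K\<close> \<open>t \<ge> 0\<close> in auto)
  then show ?thesis by simp
qed

lemma growth_system_solution:
  assumes "\<kappa> \<ge> 2" "x0 > 0" "y0 > 0" "z0 > 0" "(real \<kappa> - 1) * (x0 + y0) < 2 * real \<kappa>"
  obtains x y z :: "real \<Rightarrow> real" where "x 0 = x0" "y 0 = y0" "z 0 = z0"
    and "\<And>t. t \<ge> 0 \<Longrightarrow> x t > 0 \<and> y t > 0 \<and> z t > 0 \<and> (real \<kappa> - 1) * (x t + y t) < 2 * real \<kappa>"
    and "\<And>t. t \<ge> 0 \<Longrightarrow> ((\<lambda>s. (ln (x s), ln (y s), ln (z s))) has_vector_derivative
          growth_rates \<kappa> \<alpha> \<beta> (x t) (y t) (z t)) (at t within {0..})"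
proof -
  define K where "K = 2 * real \<kappa> / (real \<kappa> - 1)"
  define Z where "Z = max z0 (\<bar>\<alpha>\<bar> + \<bar>\<beta>\<bar>) + 1"
  have below_K: "(real \<kappa> - 1) * a < 2 * real \<kappa> \<longleftrightarrow> a < K" for a
    using assms(1) by (simp add: K_def field_simps)
  have "K > 0" using assms(1) by (simp add: K_def)
  obtain L where "L-lipschitz_on UNIV (clipped_growth_field \<kappa> \<alpha> \<beta> (ln K) (ln Z))"
    by (rule lipschitz_clipped_growth_field)
  then obtain \<xi> where \<xi>0: "\<xi> 0 = (ln x0, ln y0, ln z0)" and \<xi>: "\<And>t. t \<ge> 0 \<Longrightarrow>
      (\<xi> has_vector_derivative clipped_growth_field \<kappa> \<alpha> \<beta> (ln K) (ln Z) (\<xi> t)) (at t within {0..})"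
    using lipschitz_global_solution_exists by blast
  define X Y W where "X t = fst (\<xi> t)" and "Y t = fst (snd (\<xi> t))" and "W t = snd (snd (\<xi> t))" for t
  have \<xi>_eq: "\<xi> t = (X t, Y t, W t)" for t by (simp add: X_def Y_def W_def)
  have d: "(X has_real_derivative fst (clipped_growth_field \<kappa> \<alpha> \<beta> (ln K) (ln Z) (X t, Y t, W t)))
        (at t within {0..})"
      "(Y has_real_derivative fst (snd (clipped_growth_field \<kappa> \<alpha> \<beta> (ln K) (ln Z) (X t, Y t, W t))))
        (at t within {0..})"
      "(W has_real_derivative snd (snd (clipped_growth_field \<kappa> \<alpha> \<beta> (ln K) (ln Z) (X t, Y t, W t))))
        (at t within {0..})" if "t \<ge> 0" for t
    using has_real_derivative_components[OF \<xi>[OF that],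
        folded X_def[abs_def] Y_def[abs_def] W_def[abs_def]]
    unfolding \<xi>_eq .
  have bounds: "exp (X t) + exp (Y t) < K" "W t < ln Z" if "t \<ge> 0" for t
    using clipped_growth_xy_bound[OF assms(1) K_def d(1,2)]
      clipped_growth_z_bound[OF assms(1) K_def _ d(3)]
      \<xi>0 assms(2-5) below_K that by (auto simp: X_def Y_def W_def Z_def)
  show ?thesis
  proof
    show "exp (X 0) = x0" "exp (Y 0) = y0" "exp (W 0) = z0"
      using \<xi>0 assms(2-4) by (simp_all add: X_def Y_def W_def)
    fix t :: real assume "t \<ge> 0"
    show "exp (X t) > 0 \<and> exp (Y t) > 0 \<and> exp (W t) > 0 \<and>
        (real \<kappa> - 1) * (exp (X t) + exp (Y t)) < 2 * real \<kappa>"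
      using bounds(1)[OF \<open>t \<ge> 0\<close>] below_K by simp
    have "X t \<le> ln K" "Y t \<le> ln K"
      using bounds(1)[OF \<open>t \<ge> 0\<close>] \<open>K > 0\<close> by (simp_all add: ln_ge_iff) (smt (verit) exp_gt_zero)+
    then show "((\<lambda>s. (ln (exp (X s)), ln (exp (Y s)), ln (exp (W s)))) has_vector_derivative
        growth_rates \<kappa> \<alpha> \<beta> (exp (X t)) (exp (Y t)) (exp (W t))) (at t within {0..})"
      using \<xi>[OF \<open>t \<ge> 0\<close>] bounds(2)[OF \<open>t \<ge> 0\<close>] \<xi>_eq[abs_def, symmetric]
      by (simp add: \<xi>_eq clipped_growth_field_def clipped_exp_def)
  qed
qed

lemma reduced_field_growth_rates:
  assumes "x > 0" "y > 0" "z > 0" and "growth_rates \<kappa> \<alpha> \<beta> x y z = (r1, r2, r3)"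
  shows "reduced_field \<kappa> \<alpha> \<beta> (1 / (x * z), 1 / (y * z), 1 / z)
    = (- (r1 + r3) / (x * z), - (r2 + r3) / (y * z), - r3 / z)"
proof -
  define m where "m = \<beta> * (real \<kappa> - 1) / real \<kappa>"
  have r: "r1 = 2 * z * (1 - x) + 2 * \<beta> - m * (x + y)" "r2 = 2 * z * (1 - y) - 2 * \<beta> + m * (x + y)"
    "r3 = - 2 * z + 2 * \<alpha> + m * (y - x)"
    using assms(4) by (simp_all add: growth_rates_def Let_def m_def)
  have G: "reduced_field \<kappa> \<alpha> \<beta> (p, q, e) = (2 - 2 * (\<alpha> + \<beta>) * p + 2 * m * e,
      2 - 2 * (\<alpha> - \<beta>) * q - 2 * m * e, 2 - 2 * \<alpha> * e - m * e\<^sup>2 / q + m * e\<^sup>2 / p)" for p q e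
    by (simp add: reduced_field_def m_def)
  show ?thesis
    unfolding G r using assms(1-3) by (simp add: field_simps power2_eq_square)
qed

lemma pos_def_region_growth_coords:
  assumes "x > 0" "y > 0" "z > 0"
  shows "(1 / (x * z), 1 / (y * z), 1 / z) \<in> pos_def_region \<kappa> \<longleftrightarrow> (real \<kappa> - 1) * (x + y) < 2 * real \<kappa>"
proof -
  have lhs: "(real \<kappa> - 1) * (1 / z) * (1 / (x * z) + 1 / (y * z))
      = (real \<kappa> - 1) * (x + y) / (x * y * z\<^sup>2)"
    and rhs: "2 * real \<kappa> * (1 / (x * z)) * (1 / (y * z)) = 2 * real \<kappa> / (x * y * z\<^sup>2)"
    using assms by (simp_all add: field_simps power2_eq_square)
  have "\<not> x * y * z\<^sup>2 < 0" "x * y * z\<^sup>2 \<noteq> 0" using assms by (simp_all add: not_less)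
  then show ?thesis
    unfolding pos_def_region_def mem_Collect_eq prod.case lhs rhs
    using assms by (simp add: divide_less_cancel)
qed

lemma has_vector_derivative_reduced_of_growth:
  assumes log: "((\<lambda>s. (ln (x s), ln (y s), ln (z s))) has_vector_derivative
      growth_rates \<kappa> \<alpha> \<beta> (x t) (y t) (z t)) (at t within T)"
    and "x t > 0" "y t > 0" "z t > 0"
  shows "((\<lambda>s. (exp (- (ln (x s) + ln (z s))), exp (- (ln (y s) + ln (z s))), exp (- ln (z s))))
      has_vector_derivative reduced_field \<kappa> \<alpha> \<beta> (1 / (x t * z t), 1 / (y t * z t), 1 / z t))
      (at t within T)"
proof -
  define X Y W where "X s = ln (x s)" and "Y s = ln (y s)" and "W s = ln (z s)" for s
  obtain r1 r2 r3 where r: "growth_rates \<kappa> \<alpha> \<beta> (x t) (y t) (z t) = (r1, r2, r3)"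
    by (metis prod.collapse)
  have "(X has_real_derivative r1) (at t within T)" "(Y has_real_derivative r2) (at t within T)"
    "(W has_real_derivative r3) (at t within T)"
    using has_real_derivative_components[OF log]
    by (simp_all add: r X_def[abs_def] Y_def[abs_def] W_def[abs_def])
  then have "((\<lambda>s. exp (- (X s + W s))) has_real_derivative exp (- (X t + W t)) * (- (r1 + r3)))
      (at t within T)"
    "((\<lambda>s. exp (- (Y s + W s))) has_real_derivative exp (- (Y t + W t)) * (- (r2 + r3)))
      (at t within T)"
    "((\<lambda>s. exp (- W s)) has_real_derivative exp (- W t) * (- r3)) (at t within T)"
    by (auto intro!: derivative_eq_intros)
  then have "((\<lambda>s. (exp (- (X s + W s)), exp (- (Y s + W s)), exp (- W s))) has_vector_derivative
      (- (r1 + r3) / (x t * z t), - (r2 + r3) / (y t * z t), - r3 / z t)) (at t within T)"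
    using assms(2-4) unfolding has_real_derivative_iff_has_vector_derivative
    by (simp add: has_vector_derivative_Pair X_def Y_def W_def exp_diff exp_minus field_simps)
  then show ?thesis
    using reduced_field_growth_rates[OF assms(2-4) r] by (simp add: X_def Y_def W_def)
qed

lemma reduced_system_solution:
  assumes "\<kappa> \<ge> 2" and "w0 \<in> pos_def_region \<kappa>"
  obtains w where "w 0 = w0"
    and "\<And>t. t \<ge> 0 \<Longrightarrow> (w has_vector_derivative reduced_field \<kappa> \<alpha> \<beta> (w t)) (at t within {0..})"
    and "\<And>t. t \<ge> 0 \<Longrightarrow> w t \<in> pos_def_region \<kappa>"
proof -
  obtain p0 q0 e0 where w0: "w0 = (p0, q0, e0)" and "p0 > 0" "q0 > 0" "e0 > 0"
    using assms(2) by (auto simp: pos_def_region_def)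
  have w0_eq: "w0 = (1 / (e0 / p0 * (1 / e0)), 1 / (e0 / q0 * (1 / e0)), 1 / (1 / e0))"
    using \<open>p0 > 0\<close> \<open>q0 > 0\<close> \<open>e0 > 0\<close> by (simp add: w0)
  have pos0: "e0 / p0 > 0" "e0 / q0 > 0" "1 / e0 > 0" using \<open>p0 > 0\<close> \<open>q0 > 0\<close> \<open>e0 > 0\<close> by simp_all
  then have "(real \<kappa> - 1) * (e0 / p0 + e0 / q0) < 2 * real \<kappa>"
    using assms(2) pos_def_region_growth_coords[OF pos0] w0_eq by simp
  then obtain x y z where init: "x 0 = e0 / p0" "y 0 = e0 / q0" "z 0 = 1 / e0"
    and pos: "\<And>t. t \<ge> 0 \<Longrightarrow> x t > 0 \<and> y t > 0 \<and> z t > 0 \<and> (real \<kappa> - 1) * (x t + y t) < 2 * real \<kappa>"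
    and log: "\<And>t. t \<ge> 0 \<Longrightarrow> ((\<lambda>s. (ln (x s), ln (y s), ln (z s))) has_vector_derivative
          growth_rates \<kappa> \<alpha> \<beta> (x t) (y t) (z t)) (at t within {0..})"
    using growth_system_solution[OF assms(1) pos0, where \<alpha> = \<alpha> and \<beta> = \<beta>] by blast
  define w where
    "w s = (exp (- (ln (x s) + ln (z s))), exp (- (ln (y s) + ln (z s))), exp (- ln (z s)))" for s
  have w: "w t = (1 / (x t * z t), 1 / (y t * z t), 1 / z t)" if "t \<ge> 0" for t
    using pos[OF that] by (simp add: w_def exp_diff exp_minus inverse_eq_divide)
  show ?thesis
  proof
    show "w 0 = w0" using w[of 0] init w0_eq by simp
    fix t :: real assume "t \<ge> 0"
    then have "x t > 0" "y t > 0" "z t > 0" using pos by auto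
    then show "w t \<in> pos_def_region \<kappa>"
      using w[OF \<open>t \<ge> 0\<close>] pos_def_region_growth_coords pos[OF \<open>t \<ge> 0\<close>] by simp
    show "(w has_vector_derivative reduced_field \<kappa> \<alpha> \<beta> (w t)) (at t within {0..})"
      using has_vector_derivative_reduced_of_growth[OF log[OF \<open>t \<ge> 0\<close>] \<open>x t > 0\<close> \<open>y t > 0\<close> \<open>z t > 0\<close>]
        w[OF \<open>t \<ge> 0\<close>] unfolding w_def[abs_def] by simp
  qed
qed

section \<open>The matrices M(a, b, c)\<close>

lemma sum_atMost_head: "(\<Sum>k\<le>n. f k) = f 0 + (\<Sum>k\<in>{0<..n}. f k)" for n :: nat
  by (simp add: atMost_atLeast0 sum.head)

lemma in_scrM_eq_matM:
  assumes "\<kappa> \<ge> 2" and "in_scrM \<kappa> A"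
  shows "mat_eq_on \<kappa> A (matM \<kappa> (A 0 0) (A 0 1) (A 1 2))"
proof -
  obtain a b c where abc: "mat_eq_on \<kappa> A (matM \<kappa> a b c)"
    using assms(2) by (auto simp: in_scrM_def)
  then have "A 0 0 = a" "A 0 1 = b" "A 1 2 = c"
    using assms(1) by (auto simp: mat_eq_on_def matM_def)
  then show ?thesis using abc by simp
qed

lemma pos_def_cong:
  assumes eq: "mat_eq_on \<kappa> A B" and "pos_def \<kappa> A"
  shows "pos_def \<kappa> B"
proof -
  have "(\<Sum>i\<le>\<kappa>. \<Sum>j\<le>\<kappa>. v i * A i j * v j) = (\<Sum>i\<le>\<kappa>. \<Sum>j\<le>\<kappa>. v i * B i j * v j)" for v
    using eq unfolding mat_eq_on_def by (intro sum.cong) auto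
  moreover have "B i j = B j i" if "i \<le> \<kappa>" "j \<le> \<kappa>" for i j
    using assms that unfolding pos_def_def mat_eq_on_def by force
  ultimately show ?thesis
    using assms(2) unfolding pos_def_def by presburger
qed

lemma quadratic_form_matM:
  fixes v :: "nat \<Rightarrow> real" and \<kappa> :: nat
  defines "S \<equiv> \<Sum>i\<in>{0<..\<kappa>}. v i" and "T \<equiv> \<Sum>i\<in>{0<..\<kappa>}. (v i)\<^sup>2"
  shows "(\<Sum>i\<le>\<kappa>. \<Sum>j\<le>\<kappa>. v i * matM \<kappa> a b c i j * v j)
    = a * (v 0)\<^sup>2 + 2 * b * v 0 * S + c * S\<^sup>2 + (a - c) * T"
proof -
  have row0: "(\<Sum>j\<le>\<kappa>. v 0 * matM \<kappa> a b c 0 j * v j) = v 0 * (a * v 0 + b * S)"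
    unfolding sum_atMost_head S_def by (simp add: matM_def sum_distrib_left algebra_simps)
  have row: "(\<Sum>j\<le>\<kappa>. v i * matM \<kappa> a b c i j * v j) = v i * (b * v 0 + c * S + (a - c) * v i)"
    if i: "i \<in> {0<..\<kappa>}" for i
  proof -
    have "(\<Sum>j\<in>{0<..\<kappa>}. v i * matM \<kappa> a b c i j * v j)
        = (\<Sum>j\<in>{0<..\<kappa>}. v i * c * v j + (if j = i then v i * (a - c) * v j else 0))"
      by (rule sum.cong) (use i in \<open>auto simp: matM_def algebra_simps\<close>)
    also have "\<dots> = v i * c * S + v i * (a - c) * v i"
      using i by (simp add: sum.distrib sum_distrib_left S_def)
    finally show ?thesis unfolding sum_atMost_head using i by (simp add: matM_def algebra_simps)
  qed
  have "(\<Sum>i\<le>\<kappa>. \<Sum>j\<le>\<kappa>. v i * matM \<kappa> a b c i j * v j)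
      = v 0 * (a * v 0 + b * S) + (\<Sum>i\<in>{0<..\<kappa>}. (b * v 0 + c * S) * v i + (a - c) * (v i)\<^sup>2)"
    unfolding sum_atMost_head[of "\<lambda>i. \<Sum>j\<le>\<kappa>. v i * matM \<kappa> a b c i j * v j"] row0
    using row by (intro arg_cong[where f = "\<lambda>x. _ + x"] sum.cong)
      (auto simp: algebra_simps power2_eq_square)
  also have "\<dots> = v 0 * (a * v 0 + b * S) + (b * v 0 + c * S) * S + (a - c) * T"
    by (simp add: sum.distrib sum_distrib_left S_def T_def)
  finally show ?thesis by (simp add: algebra_simps power2_eq_square)
qed

lemma pos_def_matM_necessary:
  assumes "\<kappa> \<ge> 2" and "pos_def \<kappa> (matM \<kappa> a b c)"
  shows "a + b > 0" "a - b > 0" "a - c > 0" "real \<kappa> * b\<^sup>2 < a * (a + (real \<kappa> - 1) * c)"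
proof -
  have Q: "0 < a * (v 0)\<^sup>2 + 2 * b * v 0 * (\<Sum>i\<in>{0<..\<kappa>}. v i) + c * (\<Sum>i\<in>{0<..\<kappa>}. v i)\<^sup>2
      + (a - c) * (\<Sum>i\<in>{0<..\<kappa>}. (v i)\<^sup>2)" if "v i \<noteq> 0" "i \<le> \<kappa>" for v i
    using assms(2) that unfolding pos_def_def quadratic_form_matM by blast
  \<comment> \<open>Test vectors e_0 + w e_1, e_1 - e_2 and (- kappa b / a, 1, ..., 1).\<close>
  have in_range: "1 \<in> {0<..\<kappa>}" "2 \<in> {0<..\<kappa>}" using assms(1) by auto
  have e01: "0 < a + 2 * b * w + a * w\<^sup>2" for w
  proof -
    define v where "v i = (if i = 0 then 1 else if i = 1 then w else 0)" for i :: nat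
    have "(\<Sum>i\<in>{0<..\<kappa>}. v i) = (\<Sum>i\<in>{0<..\<kappa>}. if i = 1 then w else 0)"
      "(\<Sum>i\<in>{0<..\<kappa>}. (v i)\<^sup>2) = (\<Sum>i\<in>{0<..\<kappa>}. if i = 1 then w\<^sup>2 else 0)"
      by (rule sum.cong, simp, simp add: v_def)+
    then have "(\<Sum>i\<in>{0<..\<kappa>}. v i) = w" "(\<Sum>i\<in>{0<..\<kappa>}. (v i)\<^sup>2) = w\<^sup>2"
      using in_range by simp_all
    then show ?thesis using Q[of v 0] by (simp add: v_def algebra_simps)
  qed
  show "a + b > 0" "a - b > 0" using e01[of 1] e01[of "-1"] by simp_all
  then have "a > 0" by simp
  have "0 < (a - c) * 2"
  proof -
    define v where "v i = (if i = 1 then 1 else 0) - (if i = 2 then 1 else (0::real))" for i :: nat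
    have "(\<Sum>i\<in>{0<..\<kappa>}. v i)
        = (\<Sum>i\<in>{0<..\<kappa>}. if i = 1 then 1 else 0) - (\<Sum>i\<in>{0<..\<kappa>}. if i = 2 then 1 else 0)"
      "(\<Sum>i\<in>{0<..\<kappa>}. (v i)\<^sup>2)
        = (\<Sum>i\<in>{0<..\<kappa>}. if i = 1 then 1 else 0) + (\<Sum>i\<in>{0<..\<kappa>}. if i = 2 then 1 else 0)"
      unfolding sum_subtractf[symmetric] sum.distrib[symmetric]
      by (rule sum.cong, simp, simp add: v_def)+
    then have "(\<Sum>i\<in>{0<..\<kappa>}. v i) = 0" "(\<Sum>i\<in>{0<..\<kappa>}. (v i)\<^sup>2) = 2"
      using in_range by simp_all
    then show ?thesis using Q[of v 1] assms(1) by (simp add: v_def)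
  qed
  then show "a - c > 0" by simp
  define t where "t = - real \<kappa> * b / a"
  define v where "v i = (if i = 0 then t else 1)" for i :: nat
  have "(\<Sum>i\<in>{0<..\<kappa>}. v i) = real \<kappa>" "(\<Sum>i\<in>{0<..\<kappa>}. (v i)\<^sup>2) = real \<kappa>"
    by (simp_all add: v_def)
  then have "0 < a * t\<^sup>2 + 2 * b * t * real \<kappa> + c * (real \<kappa>)\<^sup>2 + (a - c) * real \<kappa>"
    using Q[of v 1] assms(1) by (simp add: v_def)
  also have "\<dots> = real \<kappa> * ((a * (a + (real \<kappa> - 1) * c) - real \<kappa> * b\<^sup>2) / a)"
    using \<open>a > 0\<close> by (simp add: t_def field_simps power2_eq_square)
  finally show "real \<kappa> * b\<^sup>2 < a * (a + (real \<kappa> - 1) * c)"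
    using \<open>a > 0\<close> by (simp add: zero_less_mult_iff zero_less_divide_iff)
qed

lemma pos_def_matM_sufficient:
  assumes "\<kappa> \<ge> 2" and "a > 0" "a - c > 0" and det: "real \<kappa> * b\<^sup>2 < a * (a + (real \<kappa> - 1) * c)"
  shows "pos_def \<kappa> (matM \<kappa> a b c)"
  unfolding pos_def_def
proof (intro conjI allI impI)
  show "matM \<kappa> a b c i j = matM \<kappa> a b c j i" for i j by (auto simp: matM_def)
  fix v :: "nat \<Rightarrow> real" assume "\<exists>i\<le>\<kappa>. v i \<noteq> 0"
  define S T n where "S = (\<Sum>i\<in>{0<..\<kappa>}. v i)" and "T = (\<Sum>i\<in>{0<..\<kappa>}. (v i)\<^sup>2)" and "n = real \<kappa>"
  have "n \<ge> 2" using assms(1) by (simp add: n_def)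
  define p where "p = (a + (n - 1) * c) / n"
  have Q: "(\<Sum>i\<le>\<kappa>. \<Sum>j\<le>\<kappa>. v i * matM \<kappa> a b c i j * v j)
      = (a * v 0 + b * S)\<^sup>2 / a + (p - b\<^sup>2 / a) * S\<^sup>2 + (a - c) * (T - S\<^sup>2 / n)"
    unfolding quadratic_form_matM S_def[symmetric] T_def[symmetric]
    using \<open>a > 0\<close> \<open>n \<ge> 2\<close> by (simp add: p_def field_simps power2_eq_square)
  have "p - b\<^sup>2 / a > 0"
    using det \<open>a > 0\<close> \<open>n \<ge> 2\<close> by (simp add: p_def n_def[symmetric] field_simps)
  have "S\<^sup>2 \<le> T * n"
    using sum_squared_le_sum_of_squares[of v "{0<..\<kappa>}"] by (simp add: S_def T_def n_def)
  then have "T - S\<^sup>2 / n \<ge> 0" using \<open>n \<ge> 2\<close> by (simp add: field_simps)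
  then have "(a - c) * (T - S\<^sup>2 / n) \<ge> 0" using \<open>a - c > 0\<close> by simp
  consider "S \<noteq> 0" | "S = 0" "v 0 \<noteq> 0" | "S = 0" "v 0 = 0" by blast
  then show "(\<Sum>i\<le>\<kappa>. \<Sum>j\<le>\<kappa>. v i * matM \<kappa> a b c i j * v j) > 0"
  proof cases
    case 1
    then have "(p - b\<^sup>2 / a) * S\<^sup>2 > 0" using \<open>p - b\<^sup>2 / a > 0\<close> by simp
    then show ?thesis unfolding Q using \<open>a > 0\<close> \<open>(a - c) * (T - S\<^sup>2 / n) \<ge> 0\<close>
      by (smt (verit) divide_nonneg_pos zero_le_power2)
  next
    case 2
    then have "(a * v 0 + b * S)\<^sup>2 / a > 0" using \<open>a > 0\<close> by simp
    then show ?thesis unfolding Q using 2 \<open>(a - c) * (T - S\<^sup>2 / n) \<ge> 0\<close> by simp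
  next
    case 3
    then obtain i where "i \<in> {0<..\<kappa>}" "v i \<noteq> 0"
      using \<open>\<exists>i\<le>\<kappa>. v i \<noteq> 0\<close> by (metis greaterThanAtMost_iff neq0_conv)
    then have "T > 0"
      unfolding T_def by (intro sum_pos2[of _ i]) auto
    then show ?thesis unfolding Q using 3 \<open>a - c > 0\<close> by simp
  qed
qed

lemma pos_def_matM_iff:
  assumes "\<kappa> \<ge> 2"
  shows "pos_def \<kappa> (matM \<kappa> a b c) \<longleftrightarrow>
    a + b > 0 \<and> a - b > 0 \<and> a - c > 0 \<and> real \<kappa> * b\<^sup>2 < a * (a + (real \<kappa> - 1) * c)"
  using pos_def_matM_necessary[OF assms] pos_def_matM_sufficient[OF assms, of a c b] by auto

lemma matL_apply:
  "matL \<kappa> \<alpha> \<beta> A i k = (if i = 0 \<and> k = 0 then \<alpha> else if i = k then alpha_t \<kappa> \<alpha> \<beta> A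
     else if i = 0 then \<beta> / real \<kappa> else if k = 0 then beta_t \<kappa> \<alpha> \<beta> A else 0)"
  by (simp add: matL_def matQ_def matI_def matP_def mat_tr_def)

lemma mat_mult_matL_row_zero:
  "mat_mult \<kappa> (matL \<kappa> \<alpha> \<beta> A) A 0 j = \<alpha> * A 0 j + \<beta> / real \<kappa> * (\<Sum>k\<in>{0<..\<kappa>}. A k j)"
  unfolding mat_mult_def sum_atMost_head by (simp add: matL_apply sum_distrib_left)

lemma mat_mult_matL_row:
  assumes "0 < i" "i \<le> \<kappa>"
  shows "mat_mult \<kappa> (matL \<kappa> \<alpha> \<beta> A) A i j = beta_t \<kappa> \<alpha> \<beta> A * A 0 j + alpha_t \<kappa> \<alpha> \<beta> A * A i j"
proof -
  have "(\<Sum>k\<in>{0<..\<kappa>}. matL \<kappa> \<alpha> \<beta> A i k * A k j)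
      = (\<Sum>k\<in>{0<..\<kappa>}. if k = i then alpha_t \<kappa> \<alpha> \<beta> A * A k j else 0)"
    by (rule sum.cong) (use assms in \<open>auto simp: matL_apply\<close>)
  then show ?thesis
    unfolding mat_mult_def sum_atMost_head using assms by (simp add: matL_apply)
qed

lemma column_sum_matM:
  assumes "j \<le> \<kappa>"
  shows "(\<Sum>k\<in>{0<..\<kappa>}. matM \<kappa> a b c k j) = (if j = 0 then real \<kappa> * b else a + (real \<kappa> - 1) * c)"
proof (cases "j = 0")
  case True
  then show ?thesis by (simp add: matM_def)
next
  case False
  then have "j \<in> {0<..\<kappa>}" using assms by auto
  then have "(\<Sum>k\<in>{0<..\<kappa>}. matM \<kappa> a b c k j) = a + (\<Sum>k\<in>{0<..\<kappa>} - {j}. c)"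
    using False by (simp add: sum.remove matM_def)
  then show ?thesis using False \<open>j \<in> {0<..\<kappa>}\<close> by (simp add: of_nat_diff algebra_simps)
qed

lemma alpha_beta_t_identities:
  fixes \<alpha> \<beta> :: real
  assumes "\<kappa> > 0" and "A 0 0 = a" "A 0 1 = b" "A 1 2 = c" and "\<bar>a\<bar> \<noteq> \<bar>b\<bar>"
  defines "m \<equiv> \<beta> * (real \<kappa> - 1) / real \<kappa>"
  shows "beta_t \<kappa> \<alpha> \<beta> A * b + alpha_t \<kappa> \<alpha> \<beta> A * a = \<alpha> * a + \<beta> * b"
    and "beta_t \<kappa> \<alpha> \<beta> A * a + alpha_t \<kappa> \<alpha> \<beta> A * b = \<alpha> * b + \<beta> * a / real \<kappa> + m * c"
    and "beta_t \<kappa> \<alpha> \<beta> A * b + alpha_t \<kappa> \<alpha> \<beta> A * c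
      = \<alpha> * c + \<beta> * b - m * b * (a - c)\<^sup>2 / ((a + b) * (a - b))"
proof -
  have "a\<^sup>2 - b\<^sup>2 \<noteq> 0"
    using assms(5) by (metis abs_eq_iff' abs_minus_cancel power2_eq_iff right_minus_eq)
  moreover have "a\<^sup>2 - b\<^sup>2 = (a + b) * (a - b)" by (simp add: power2_eq_square algebra_simps)
  ultimately have I: "gg a b c * b + ff a b c * a = b" "gg a b c * a + ff a b c * b = c"
    "gg a b c * b + ff a b c * c = b - b * (a - c)\<^sup>2 / ((a + b) * (a - b))"
    unfolding gg_def ff_def
    by (simp_all add: divide_simps) (simp_all add: power2_eq_square algebra_simps)
  have at: "alpha_t \<kappa> \<alpha> \<beta> A = \<alpha> + m * ff a b c"
    and bt: "beta_t \<kappa> \<alpha> \<beta> A = \<beta> / real \<kappa> + m * gg a b c"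
    using assms(2-5) by (simp_all add: alpha_t_def beta_t_def Let_def m_def flip: One_nat_def)
  have mb: "\<beta> / real \<kappa> * b + m * b = \<beta> * b" using \<open>\<kappa> > 0\<close> by (simp add: m_def field_simps)
  have "beta_t \<kappa> \<alpha> \<beta> A * b + alpha_t \<kappa> \<alpha> \<beta> A * a
      = \<alpha> * a + \<beta> / real \<kappa> * b + m * (gg a b c * b + ff a b c * a)"
    unfolding at bt by (simp add: algebra_simps)
  also have "\<dots> = \<alpha> * a + \<beta> * b" unfolding I(1) using mb by simp
  finally show "beta_t \<kappa> \<alpha> \<beta> A * b + alpha_t \<kappa> \<alpha> \<beta> A * a = \<alpha> * a + \<beta> * b" .
  have "beta_t \<kappa> \<alpha> \<beta> A * a + alpha_t \<kappa> \<alpha> \<beta> A * b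
      = \<alpha> * b + \<beta> * a / real \<kappa> + m * (gg a b c * a + ff a b c * b)"
    unfolding at bt by (simp add: algebra_simps)
  then show "beta_t \<kappa> \<alpha> \<beta> A * a + alpha_t \<kappa> \<alpha> \<beta> A * b = \<alpha> * b + \<beta> * a / real \<kappa> + m * c"
    unfolding I(2) .
  have "beta_t \<kappa> \<alpha> \<beta> A * b + alpha_t \<kappa> \<alpha> \<beta> A * c
      = \<alpha> * c + \<beta> / real \<kappa> * b + m * (gg a b c * b + ff a b c * c)"
    unfolding at bt by (simp add: algebra_simps)
  also have "\<dots> = \<alpha> * c + \<beta> * b - m * b * (a - c)\<^sup>2 / ((a + b) * (a - b))"
    unfolding I(3) using mb by (simp add: right_diff_distrib)
  finally show "beta_t \<kappa> \<alpha> \<beta> A * b + alpha_t \<kappa> \<alpha> \<beta> A * c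
      = \<alpha> * c + \<beta> * b - m * b * (a - c)\<^sup>2 / ((a + b) * (a - b))" .
qed

lemma mat_mult_matL_matM:
  fixes \<alpha> \<beta> :: real
  assumes "\<kappa> \<ge> 2" and A: "mat_eq_on \<kappa> A (matM \<kappa> a b c)" and "\<bar>a\<bar> \<noteq> \<bar>b\<bar>"
  defines "m \<equiv> \<beta> * (real \<kappa> - 1) / real \<kappa>"
  shows "mat_eq_on \<kappa> (mat_mult \<kappa> (matL \<kappa> \<alpha> \<beta> A) A) (matM \<kappa> (\<alpha> * a + \<beta> * b)
    (\<alpha> * b + \<beta> * a / real \<kappa> + m * c) (beta_t \<kappa> \<alpha> \<beta> A * b + alpha_t \<kappa> \<alpha> \<beta> A * c))"
  unfolding mat_eq_on_def
proof (intro allI impI)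
  fix i j assume ij: "i \<le> \<kappa>" "j \<le> \<kappa>"
  have AM: "A k l = matM \<kappa> a b c k l" if "k \<le> \<kappa>" "l \<le> \<kappa>" for k l
    using A that by (simp add: mat_eq_on_def)
  have "A 0 0 = a" "A 0 1 = b" "A 1 2 = c" "\<kappa> > 0"
    using AM[of 0 0] AM[of 0 1] AM[of 1 2] \<open>\<kappa> \<ge> 2\<close> by (auto simp: matM_def)
  note I = alpha_beta_t_identities[OF this(4,1-3) \<open>\<bar>a\<bar> \<noteq> \<bar>b\<bar>\<close>, where \<alpha> = \<alpha> and \<beta> = \<beta>, folded m_def]
  show "mat_mult \<kappa> (matL \<kappa> \<alpha> \<beta> A) A i j = matM \<kappa> (\<alpha> * a + \<beta> * b)
      (\<alpha> * b + \<beta> * a / real \<kappa> + m * c) (beta_t \<kappa> \<alpha> \<beta> A * b + alpha_t \<kappa> \<alpha> \<beta> A * c) i j"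
  proof (cases "i = 0")
    case True
    have "(\<Sum>k\<in>{0<..\<kappa>}. A k j) = (\<Sum>k\<in>{0<..\<kappa>}. matM \<kappa> a b c k j)"
      by (rule sum.cong) (use ij in \<open>auto simp: AM\<close>)
    then have "mat_mult \<kappa> (matL \<kappa> \<alpha> \<beta> A) A 0 j
        = \<alpha> * matM \<kappa> a b c 0 j + \<beta> / real \<kappa> * (if j = 0 then real \<kappa> * b else a + (real \<kappa> - 1) * c)"
      using ij column_sum_matM[OF ij(2)] by (simp add: mat_mult_matL_row_zero AM)
    also have "\<dots> = matM \<kappa> (\<alpha> * a + \<beta> * b) (\<alpha> * b + \<beta> * a / real \<kappa> + m * c)
        (beta_t \<kappa> \<alpha> \<beta> A * b + alpha_t \<kappa> \<alpha> \<beta> A * c) 0 j"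
      using \<open>\<kappa> > 0\<close> by (auto simp: matM_def m_def field_simps)
    finally show ?thesis using True by simp
  next
    case False
    then have "mat_mult \<kappa> (matL \<kappa> \<alpha> \<beta> A) A i j
        = beta_t \<kappa> \<alpha> \<beta> A * matM \<kappa> a b c 0 j + alpha_t \<kappa> \<alpha> \<beta> A * matM \<kappa> a b c i j"
      using ij by (simp add: mat_mult_matL_row AM)
    then show ?thesis using False I(1,2) by (auto simp: matM_def algebra_simps)
  qed
qed

lemma matF_matM:
  fixes \<alpha> \<beta> :: real
  assumes "\<kappa> \<ge> 2" and A: "mat_eq_on \<kappa> A (matM \<kappa> a b c)" and "\<bar>a\<bar> \<noteq> \<bar>b\<bar>"
  defines "m \<equiv> \<beta> * (real \<kappa> - 1) / real \<kappa>"
  shows "mat_eq_on \<kappa> (matF \<kappa> \<alpha> \<beta> A) (matM \<kappa> (2 - 2 * (\<alpha> * a + \<beta> * b))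
    (- 2 * (\<alpha> * b + \<beta> * a / real \<kappa> + m * c)) (- 2 * (beta_t \<kappa> \<alpha> \<beta> A * b + alpha_t \<kappa> \<alpha> \<beta> A * c)))"
  unfolding mat_eq_on_def
proof (intro allI impI)
  fix i j assume ij: "i \<le> \<kappa>" "j \<le> \<kappa>"
  define R where "R = mat_mult \<kappa> (matL \<kappa> \<alpha> \<beta> A) A"
  \<comment> \<open>A is symmetric, so A L^T is the transpose of R = L A, and R is again of the form M(a', b', c').\<close>
  have "mat_mult \<kappa> A (mat_tr (matL \<kappa> \<alpha> \<beta> A)) i j = R j i"
    unfolding mat_mult_def mat_tr_def R_def
    using A ij by (intro sum.cong) (auto simp: mat_eq_on_def matM_def mult.commute)
  moreover note mat_mult_matL_matM[OF assms(1-3), where \<alpha> = \<alpha> and \<beta> = \<beta>, folded m_def R_def]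
  ultimately show "matF \<kappa> \<alpha> \<beta> A i j = matM \<kappa> (2 - 2 * (\<alpha> * a + \<beta> * b))
      (- 2 * (\<alpha> * b + \<beta> * a / real \<kappa> + m * c)) (- 2 * (beta_t \<kappa> \<alpha> \<beta> A * b + alpha_t \<kappa> \<alpha> \<beta> A * c)) i j"
    using ij by (auto simp: matF_def R_def mat_eq_on_def matM_def matI_def)
qed

section \<open>Reduced coordinates of matrix solutions\<close>

definition reduced_coords :: "rmat \<Rightarrow> real \<times> real \<times> real" where
  "reduced_coords A = (A 0 0 + A 0 1, A 0 0 - A 0 1, A 0 0 - A 1 2)"

definition matR :: "nat \<Rightarrow> real \<times> real \<times> real \<Rightarrow> rmat" where
  "matR \<kappa> = (\<lambda>(p, q, e). matM \<kappa> ((p + q) / 2) ((p - q) / 2) ((p + q) / 2 - e))"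

lemma matR_eq_matM: "matR \<kappa> (a + b, a - b, a - c) = matM \<kappa> a b c"
  by (simp add: matR_def)

lemma reduced_coords_matR: "\<kappa> \<ge> 2 \<Longrightarrow> reduced_coords (matR \<kappa> w) = w"
  by (cases w) (auto simp: reduced_coords_def matR_def matM_def field_simps)

lemma reduced_coords_cong: "\<kappa> \<ge> 2 \<Longrightarrow> mat_eq_on \<kappa> A B \<Longrightarrow> reduced_coords A = reduced_coords B"
  by (simp add: mat_eq_on_def reduced_coords_def)

lemma in_scrM_matR: "in_scrM \<kappa> (matR \<kappa> w)"
  by (auto simp: in_scrM_def matR_def mat_eq_on_def split_beta')

lemma in_scrM_eq_matR:
  assumes "\<kappa> \<ge> 2" "in_scrM \<kappa> A"
  shows "mat_eq_on \<kappa> A (matR \<kappa> (reduced_coords A))"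
  using in_scrM_eq_matM[OF assms] by (simp add: reduced_coords_def matR_eq_matM)

lemma pos_def_matR_iff:
  assumes "\<kappa> \<ge> 2"
  shows "pos_def \<kappa> (matR \<kappa> w) \<longleftrightarrow> w \<in> pos_def_region \<kappa>"
proof -
  obtain p q e where w: "w = (p, q, e)" by (cases w)
  define a b c where "a = (p + q) / 2" and "b = (p - q) / 2" and "c = (p + q) / 2 - e"
  have sums: "a + b = p" "a - b = q" "a - c = e" by (simp_all add: a_def b_def c_def field_simps)
  have "a * (a + (real \<kappa> - 1) * c) - real \<kappa> * b\<^sup>2
      = (2 * real \<kappa> * p * q - (real \<kappa> - 1) * e * (p + q)) / 2"
    by (simp add: a_def b_def c_def power2_eq_square field_simps)
  moreover have "x - y = (z - w) / 2 \<Longrightarrow> y < x \<longleftrightarrow> w < z" for x y z w :: real by auto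
  ultimately have "real \<kappa> * b\<^sup>2 < a * (a + (real \<kappa> - 1) * c) \<longleftrightarrow>
      (real \<kappa> - 1) * e * (p + q) < 2 * real \<kappa> * p * q"
    by blast
  moreover have "matR \<kappa> w = matM \<kappa> a b c" by (simp add: w matR_def a_def b_def c_def)
  ultimately show ?thesis
    unfolding w pos_def_region_def mem_Collect_eq prod.case
    by (simp only: pos_def_matM_iff[OF assms] sums)
qed

lemma matR_reduced_field:
  fixes \<alpha> \<beta> :: real
  assumes "\<kappa> > 0" and "A 0 0 = a" "A 0 1 = b" "A 1 2 = c" and "a + b \<noteq> 0" "a - b \<noteq> 0"
  defines "m \<equiv> \<beta> * (real \<kappa> - 1) / real \<kappa>"
  shows "matR \<kappa> (reduced_field \<kappa> \<alpha> \<beta> (a + b, a - b, a - c)) = matM \<kappa> (2 - 2 * (\<alpha> * a + \<beta> * b))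
    (- 2 * (\<alpha> * b + \<beta> * a / real \<kappa> + m * c)) (- 2 * (beta_t \<kappa> \<alpha> \<beta> A * b + alpha_t \<kappa> \<alpha> \<beta> A * c))"
    (is "_ = matM \<kappa> ?Fa ?Fb ?Fc")
proof -
  have "\<bar>a\<bar> \<noteq> \<bar>b\<bar>" using assms(5,6) by (auto simp: abs_eq_iff)
  note ident = alpha_beta_t_identities(3)[OF assms(1-4) this, where \<alpha> = \<alpha> and \<beta> = \<beta>, folded m_def]
  have "?Fa - ?Fc = 2 - 2 * (\<alpha> * a + \<beta> * b) + 2 * (beta_t \<kappa> \<alpha> \<beta> A * b + alpha_t \<kappa> \<alpha> \<beta> A * c)"
    by simp
  also have "\<dots> = 2 - 2 * (\<alpha> * a + \<beta> * b)
      + 2 * (\<alpha> * c + \<beta> * b - m * b * (a - c)\<^sup>2 / ((a + b) * (a - b)))"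
    by (simp only: ident)
  also have "\<dots> = 2 - 2 * \<alpha> * (a - c) - 2 * (m * b * (a - c)\<^sup>2 / ((a + b) * (a - b)))"
    by (simp add: algebra_simps)
  also have "2 * (m * b * (a - c)\<^sup>2 / ((a + b) * (a - b)))
      = m * (a - c)\<^sup>2 / (a - b) - m * (a - c)\<^sup>2 / (a + b)"
    using assms(5,6) by (simp add: field_simps)
  finally have "?Fa - ?Fc = 2 - 2 * \<alpha> * (a - c) - m * (a - c)\<^sup>2 / (a - b) + m * (a - c)\<^sup>2 / (a + b)"
    by simp
  moreover have "?Fa + ?Fb = 2 - 2 * (\<alpha> + \<beta>) * (a + b) + 2 * m * (a - c)"
    "?Fa - ?Fb = 2 - 2 * (\<alpha> - \<beta>) * (a - b) - 2 * m * (a - c)"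
    using \<open>\<kappa> > 0\<close> by (simp_all add: m_def field_simps)
  ultimately have "reduced_field \<kappa> \<alpha> \<beta> (a + b, a - b, a - c) = (?Fa + ?Fb, ?Fa - ?Fb, ?Fa - ?Fc)"
    by (simp add: reduced_field_def m_def)
  then show ?thesis by (simp only: matR_eq_matM)
qed

lemma matF_eq_matR:
  assumes "\<kappa> \<ge> 2" "in_scrM \<kappa> A" and "fst (reduced_coords A) \<noteq> 0" "fst (snd (reduced_coords A)) \<noteq> 0"
  shows "mat_eq_on \<kappa> (matF \<kappa> \<alpha> \<beta> A) (matR \<kappa> (reduced_field \<kappa> \<alpha> \<beta> (reduced_coords A)))"
proof -
  define a b c where "a = A 0 0" and "b = A 0 1" and "c = A 1 2"
  have A: "mat_eq_on \<kappa> A (matM \<kappa> a b c)"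
    using in_scrM_eq_matM[OF assms(1,2)] by (simp add: a_def b_def c_def)
  have "a + b \<noteq> 0" "a - b \<noteq> 0" using assms(3,4) by (simp_all add: reduced_coords_def a_def b_def)
  then have "\<bar>a\<bar> \<noteq> \<bar>b\<bar>" by (auto simp: abs_eq_iff)
  have "\<kappa> > 0" using assms(1) by simp
  have "reduced_coords A = (a + b, a - b, a - c)" by (simp add: reduced_coords_def a_def b_def c_def)
  then show ?thesis
    using matF_matM[OF assms(1) A \<open>\<bar>a\<bar> \<noteq> \<bar>b\<bar>\<close>, where \<alpha> = \<alpha> and \<beta> = \<beta>]
      matR_reduced_field[OF \<open>\<kappa> > 0\<close> a_def[symmetric] b_def[symmetric] c_def[symmetric]
        \<open>a + b \<noteq> 0\<close> \<open>a - b \<noteq> 0\<close>, where \<alpha> = \<alpha> and \<beta> = \<beta>]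
    by simp
qed

lemma has_real_derivative_matR:
  assumes "(w has_vector_derivative w') (at t within T)"
  shows "((\<lambda>s. matR \<kappa> (w s) i j) has_real_derivative matR \<kappa> w' i j) (at t within T)"
proof -
  have d: "((\<lambda>s. fst (w s)) has_real_derivative fst w') (at t within T)"
    "((\<lambda>s. fst (snd (w s))) has_real_derivative fst (snd w')) (at t within T)"
    "((\<lambda>s. snd (snd (w s))) has_real_derivative snd (snd w')) (at t within T)"
    by (rule has_real_derivative_components[OF assms])+
  then have "((\<lambda>s. (fst (w s) + fst (snd (w s))) / 2) has_real_derivative (fst w' + fst (snd w')) / 2)
      (at t within T)"
    "((\<lambda>s. (fst (w s) - fst (snd (w s))) / 2) has_real_derivative (fst w' - fst (snd w')) / 2)
      (at t within T)"
    "((\<lambda>s. (fst (w s) + fst (snd (w s))) / 2 - snd (snd (w s))) has_real_derivative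
      (fst w' + fst (snd w')) / 2 - snd (snd w')) (at t within T)"
    using DERIV_cdivide[OF DERIV_add[OF d(1,2)]] DERIV_cdivide[OF DERIV_diff[OF d(1,2)]]
      DERIV_diff[OF DERIV_cdivide[OF DERIV_add[OF d(1,2)]] d(3)] by simp_all
  then show ?thesis by (simp add: matR_def matM_def split_beta')
qed

lemma has_vector_derivative_reduced_coords:
  assumes "\<kappa> \<ge> 2"
    and "\<And>i j. i \<le> \<kappa> \<Longrightarrow> j \<le> \<kappa> \<Longrightarrow> ((\<lambda>s. W s i j) has_real_derivative W' i j) (at t within T)"
  shows "((\<lambda>s. reduced_coords (W s)) has_vector_derivative reduced_coords W') (at t within T)"
proof -
  have d00: "((\<lambda>s. W s 0 0) has_real_derivative W' 0 0) (at t within T)"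
    and d01: "((\<lambda>s. W s 0 1) has_real_derivative W' 0 1) (at t within T)"
    and d12: "((\<lambda>s. W s 1 2) has_real_derivative W' 1 2) (at t within T)"
    using assms by auto
  have "((\<lambda>s. W s 0 0 + W s 0 1) has_real_derivative W' 0 0 + W' 0 1) (at t within T)"
    "((\<lambda>s. W s 0 0 - W s 0 1) has_real_derivative W' 0 0 - W' 0 1) (at t within T)"
    "((\<lambda>s. W s 0 0 - W s 1 2) has_real_derivative W' 0 0 - W' 1 2) (at t within T)"
    using DERIV_add[OF d00 d01] DERIV_diff[OF d00 d01] DERIV_diff[OF d00 d12] by simp_all
  then show ?thesis
    unfolding reduced_coords_def has_real_derivative_iff_has_vector_derivative
    by (intro has_vector_derivative_Pair)
qed

lemma global_solution_matR:
  assumes "\<kappa> \<ge> 2" and "mat_eq_on \<kappa> (matR \<kappa> (w 0)) S"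
    and deriv: "\<And>t. t \<ge> 0 \<Longrightarrow> (w has_vector_derivative reduced_field \<kappa> \<alpha> \<beta> (w t)) (at t within {0..})"
    and nonzero: "\<And>t. t \<ge> 0 \<Longrightarrow> fst (w t) \<noteq> 0 \<and> fst (snd (w t)) \<noteq> 0"
  shows "is_global_solution \<kappa> \<alpha> \<beta> S (\<lambda>t. matR \<kappa> (w t))"
  unfolding is_global_solution_def
proof (intro conjI allI impI)
  show "in_scrM \<kappa> (matR \<kappa> (w t))" for t by (rule in_scrM_matR)
  show "mat_eq_on \<kappa> (matR \<kappa> (w 0)) S" by (rule assms(2))
  fix t :: real and i j assume "t \<ge> 0" "i \<le> \<kappa>" "j \<le> \<kappa>"
  have "mat_eq_on \<kappa> (matF \<kappa> \<alpha> \<beta> (matR \<kappa> (w t))) (matR \<kappa> (reduced_field \<kappa> \<alpha> \<beta> (w t)))"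
    using matF_eq_matR[OF assms(1) in_scrM_matR] nonzero[OF \<open>t \<ge> 0\<close>] reduced_coords_matR[OF assms(1)]
    by simp
  then show "((\<lambda>s. matR \<kappa> (w s) i j) has_real_derivative matF \<kappa> \<alpha> \<beta> (matR \<kappa> (w t)) i j)
      (at t within {0..})"
    using has_real_derivative_matR[OF deriv[OF \<open>t \<ge> 0\<close>]] \<open>i \<le> \<kappa>\<close> \<open>j \<le> \<kappa>\<close> by (simp add: mat_eq_on_def)
qed

lemma reduced_coords_global_solution:
  assumes "\<kappa> \<ge> 2" and "is_global_solution \<kappa> \<alpha> \<beta> S W" and "t \<ge> 0"
  shows "((\<lambda>s. reduced_coords (W s)) has_vector_derivative reduced_coords (matF \<kappa> \<alpha> \<beta> (W t)))
      (at t within {0..})"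
    and "fst (reduced_coords (W t)) \<noteq> 0 \<Longrightarrow> fst (snd (reduced_coords (W t))) \<noteq> 0 \<Longrightarrow>
      reduced_coords (matF \<kappa> \<alpha> \<beta> (W t)) = reduced_field \<kappa> \<alpha> \<beta> (reduced_coords (W t))"
proof -
  show "((\<lambda>s. reduced_coords (W s)) has_vector_derivative reduced_coords (matF \<kappa> \<alpha> \<beta> (W t)))
      (at t within {0..})"
    using assms by (intro has_vector_derivative_reduced_coords) (auto simp: is_global_solution_def)
  assume "fst (reduced_coords (W t)) \<noteq> 0" "fst (snd (reduced_coords (W t))) \<noteq> 0"
  moreover have "in_scrM \<kappa> (W t)" using assms by (auto simp: is_global_solution_def)
  ultimately show "reduced_coords (matF \<kappa> \<alpha> \<beta> (W t)) = reduced_field \<kappa> \<alpha> \<beta> (reduced_coords (W t))"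
    using reduced_coords_cong[OF assms(1) matF_eq_matR[OF assms(1)]] reduced_coords_matR[OF assms(1)]
    by simp
qed

lemma global_solution_unique:
  assumes "\<kappa> \<ge> 2" and W: "is_global_solution \<kappa> \<alpha> \<beta> S W" and "w 0 = reduced_coords S"
    and w: "\<And>t. t \<ge> 0 \<Longrightarrow> (w has_vector_derivative reduced_field \<kappa> \<alpha> \<beta> (w t)) (at t within {0..})"
    and w_pd: "\<And>t. t \<ge> 0 \<Longrightarrow> w t \<in> pos_def_region \<kappa>"
    and "t \<ge> 0"
  shows "mat_eq_on \<kappa> (W t) (matR \<kappa> (w t))"
proof -
  let ?U = "{w :: real \<times> real \<times> real. 0 < fst w \<and> 0 < fst (snd w)}"
  have "open ?U" by (auto intro!: open_Collect_conj open_Collect_less continuous_intros)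
  have w_in: "w s \<in> ?U" if "s \<ge> 0" for s using w_pd[OF that] pos_def_region_subset by blast
  have dW: "((\<lambda>s. reduced_coords (W s)) has_vector_derivative reduced_coords (matF \<kappa> \<alpha> \<beta> (W s)))
      (at s within {0..})" if "s \<ge> 0" for s
    using reduced_coords_global_solution(1)[OF assms(1) W that] .
  have dW_eq: "reduced_coords (matF \<kappa> \<alpha> \<beta> (W s)) = reduced_field \<kappa> \<alpha> \<beta> (reduced_coords (W s))"
    if "s \<ge> 0" "reduced_coords (W s) \<in> ?U" for s
    using reduced_coords_global_solution(2)[OF assms(1) W that(1)] that(2) by simp
  have "reduced_coords (W 0) = w 0"
    using W \<open>w 0 = reduced_coords S\<close> reduced_coords_cong[OF assms(1)]
    by (simp add: is_global_solution_def)
  from solutions_agree_locally_lipschitz[OF \<open>open ?U\<close> local_lipschitz_reduced_field w w_in dW dW_eq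
      this \<open>t \<ge> 0\<close>]
  have "reduced_coords (W t) = w t" .
  moreover have "in_scrM \<kappa> (W t)" using W \<open>t \<ge> 0\<close> by (simp add: is_global_solution_def)
  ultimately show ?thesis using in_scrM_eq_matR[OF assms(1), of "W t"] by simp
qed

theorem lemma4p10:
  fixes \<kappa> :: nat and \<alpha> \<beta> :: real and \<Sigma> :: rmat
  assumes "\<kappa> \<ge> 2" and "in_scrM_pos \<kappa> \<Sigma>"
  shows "\<exists>V. is_global_solution \<kappa> \<alpha> \<beta> \<Sigma> V \<and>
           (\<forall>W. is_global_solution \<kappa> \<alpha> \<beta> \<Sigma> W \<longrightarrow>
                (\<forall>t\<ge>0. mat_eq_on \<kappa> (W t) (V t))) \<and>
           (\<forall>t\<ge>0. in_scrM_pos \<kappa> (V t))"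
proof -
  have \<Sigma>: "mat_eq_on \<kappa> \<Sigma> (matR \<kappa> (reduced_coords \<Sigma>))"
    using assms in_scrM_eq_matR by (auto simp: in_scrM_pos_def)
  then have "pos_def \<kappa> (matR \<kappa> (reduced_coords \<Sigma>))"
    using pos_def_cong assms(2) by (auto simp: in_scrM_pos_def)
  then have "reduced_coords \<Sigma> \<in> pos_def_region \<kappa>"
    using pos_def_matR_iff[OF assms(1)] by blast
  then obtain w where w0: "w 0 = reduced_coords \<Sigma>"
    and w: "\<And>t. t \<ge> 0 \<Longrightarrow> (w has_vector_derivative reduced_field \<kappa> \<alpha> \<beta> (w t)) (at t within {0..})"
    and w_pd: "\<And>t. t \<ge> 0 \<Longrightarrow> w t \<in> pos_def_region \<kappa>"
    using reduced_system_solution[OF assms(1)] by blast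
  have "fst (w t) \<noteq> 0 \<and> fst (snd (w t)) \<noteq> 0" if "t \<ge> 0" for t
    using w_pd[OF that] pos_def_region_subset by fastforce
  moreover have "mat_eq_on \<kappa> (matR \<kappa> (w 0)) \<Sigma>" using \<Sigma> by (simp add: w0 mat_eq_on_def)
  ultimately have "is_global_solution \<kappa> \<alpha> \<beta> \<Sigma> (\<lambda>t. matR \<kappa> (w t))"
    using global_solution_matR[OF assms(1) _ w] by blast
  moreover have "in_scrM_pos \<kappa> (matR \<kappa> (w t))" if "t \<ge> 0" for t
    using w_pd[OF that] assms(1) in_scrM_matR pos_def_matR_iff by (simp add: in_scrM_pos_def)
  ultimately show ?thesis
    using global_solution_unique[OF assms(1) _ w0 w w_pd] by blast
qed

end
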